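(* Let $n\ge2$. The group $VSPG_n$ is generated by $\{\mu_{ij},\gamma_{ij}\mid 1\le i\ne j\le n\}$ subject to the defining relations (where distinct letters denote distinct indices in $\{1,\dots,n\}$): $\mu_{ij}\mu_{ik}\mu_{jk}=\mu_{jk}\mu_{ik}\mu_{ij}$; $\mu_{ij}\mu_{ik}\gamma_{jk}=\gamma_{jk}\mu_{ik}\mu_{ij}$; $\gamma_{ij}\mu_{ik}\mu_{jk}=\mu_{jk}\mu_{ik}\gamma_{ij}$; $\mu_{ij}\gamma_{ji}=\gamma_{ij}\mu_{ji}$; $\mu_{ij}\mu_{kl}=\mu_{kl}\mu_{ij}$, $\gamma_{ij}\gamma_{kl}=\gamma_{kl}\gamma_{ij}$, $\mu_{ij}\gamma_{kl}=\gamma_{kl}\mu_{ij}$.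
   Context: Let $n\ge 2$. $VSG_n$ is the group generated by $\sigma_i,v_i,\tau_i$ ($1\le i\le n-1$) subject to: $v_i^2=1$; $\sigma_i\tau_i=\tau_i\sigma_i$; for $|i-j|=1$: $\sigma_i\sigma_j\sigma_i=\sigma_j\sigma_i\sigma_j$, $v_iv_jv_i=v_jv_iv_j$, $v_i\sigma_jv_i=v_j\sigma_iv_j$, $v_i\tau_jv_i=v_j\tau_iv_j$, $\sigma_i\sigma_j\tau_i=\tau_j\sigma_i\sigma_j$; for $|i-j|>1$: $g_ih_j=h_jg_i$ for $g_i,h_i\in\{\sigma_i,\tau_i,v_i\}$. Let $\pi:VSG_n\to S_n$ be the homomorphism with $\pi(\sigma_i)=\pi(v_i)=\pi(\tau_i)=(i,i+1)$, and $VSPG_n:=\ker\pi$. Elementary fusing strings: $\mu_{i,i+1}:=\sigma_iv_i$, $\gamma_{i,i+1}:=\tau_iv_i$. Generalized fusing strings: for $1\le i<j\le n$, $\mu_{ij}:=(v_{j-1}\cdots v_{i+1})\mu_{i,i+1}(v_{i+1}\cdots v_{j-1})$, $\gamma_{ij}:=(v_{j-1}\cdots v_{i+1})\gamma_{i,i+1}(v_{i+1}\cdots v_{j-1})$, $\mu_{ji}:=(v_{j-1}\cdots v_{i+1})v_i\mu_{i,i+1}v_i(v_{i+1}\cdots v_{j-1})$, $\gamma_{ji}:=(v_{j-1}\cdots v_{i+1})v_i\gamma_{i,i+1}v_i(v_{i+1}\cdots v_{j-1})$. *)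

theory Defs
  imports "HOL-Combinatorics.Transposition"
begin

text \<open>A word over an alphabet 'a is a list of letters; a letter (x, True) is the
generator x, (x, False) is its inverse.\<close>

type_synonym 'a word = "('a \<times> bool) list"

definition pos :: "'a \<Rightarrow> 'a \<times> bool" where "pos x = (x, True)"

definition inv_word :: "'a word \<Rightarrow> 'a word" where
  "inv_word w = rev (map (\<lambda>(x, b). (x, \<not> b)) w)"

inductive word_eq :: "('a word \<times> 'a word) set \<Rightarrow> 'a word \<Rightarrow> 'a word \<Rightarrow> bool"
  for R where
  refl: "word_eq R w w"
| sym: "word_eq R u w \<Longrightarrow> word_eq R w u"
| trans: "word_eq R u v \<Longrightarrow> word_eq R v w \<Longrightarrow> word_eq R u w"
| cancel: "word_eq R (u @ [(x, b), (x, \<not> b)] @ v) (u @ v)"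
| rel: "(l, r) \<in> R \<Longrightarrow> word_eq R (u @ l @ v) (u @ r @ v)"

definition wsubst :: "('a \<Rightarrow> 'b word) \<Rightarrow> 'a word \<Rightarrow> 'b word" where
  "wsubst f w = concat (map (\<lambda>(x, b). if b then f x else inv_word (f x)) w)"

datatype vgen = Sig nat | V nat | Tau nat

fun vidx :: "vgen \<Rightarrow> nat" where
  "vidx (Sig i) = i" | "vidx (V i) = i" | "vidx (Tau i) = i"

definition vgen_ok :: "nat \<Rightarrow> vgen \<Rightarrow> bool" where
  "vgen_ok n g \<longleftrightarrow> 1 \<le> vidx g \<and> vidx g < n"

definition adj :: "nat \<Rightarrow> nat \<Rightarrow> bool" where
  "adj i j \<longleftrightarrow> i = j + 1 \<or> j = i + 1"

definition far :: "nat \<Rightarrow> nat \<Rightarrow> bool" where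
  "far i j \<longleftrightarrow> i + 1 < j \<or> j + 1 < i"

definition vsg_rels :: "nat \<Rightarrow> (vgen word \<times> vgen word) set" where
  "vsg_rels n =
     {([pos (V i), pos (V i)], []) | i. 1 \<le> i \<and> i < n}
   \<union> {([pos (Sig i), pos (Tau i)], [pos (Tau i), pos (Sig i)]) | i. 1 \<le> i \<and> i < n}
   \<union> {([pos (Sig i), pos (Sig j), pos (Sig i)], [pos (Sig j), pos (Sig i), pos (Sig j)])
       | i j. 1 \<le> i \<and> i < n \<and> 1 \<le> j \<and> j < n \<and> adj i j}
   \<union> {([pos (V i), pos (V j), pos (V i)], [pos (V j), pos (V i), pos (V j)])
       | i j. 1 \<le> i \<and> i < n \<and> 1 \<le> j \<and> j < n \<and> adj i j}
   \<union> {([pos (V i), pos (Sig j), pos (V i)], [pos (V j), pos (Sig i), pos (V j)])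
       | i j. 1 \<le> i \<and> i < n \<and> 1 \<le> j \<and> j < n \<and> adj i j}
   \<union> {([pos (V i), pos (Tau j), pos (V i)], [pos (V j), pos (Tau i), pos (V j)])
       | i j. 1 \<le> i \<and> i < n \<and> 1 \<le> j \<and> j < n \<and> adj i j}
   \<union> {([pos (Sig i), pos (Sig j), pos (Tau i)], [pos (Tau j), pos (Sig i), pos (Sig j)])
       | i j. 1 \<le> i \<and> i < n \<and> 1 \<le> j \<and> j < n \<and> adj i j}
   \<union> {([pos (g i), pos (h j)], [pos (h j), pos (g i)])
       | g h i j. g \<in> {Sig, Tau, V} \<and> h \<in> {Sig, Tau, V}
                 \<and> 1 \<le> i \<and> i < n \<and> 1 \<le> j \<and> j < n \<and> far i j}"

text \<open>The homomorphism pi : VSG_n \<rightarrow> S_n on words (all three generators with index i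
go to the transposition (i, i+1)); permutations of {1..n} are viewed as
functions nat \<Rightarrow> nat fixing everything outside {1..n}.\<close>

definition vsg_perm :: "vgen word \<Rightarrow> nat \<Rightarrow> nat" where
  "vsg_perm w = foldr (\<lambda>(x, b) f. transpose (vidx x) (vidx x + 1) \<circ> f) w id"

datatype pgen = Mu nat nat | Gam nat nat

fun pgen_ok :: "nat \<Rightarrow> pgen \<Rightarrow> bool" where
  "pgen_ok n (Mu i j) \<longleftrightarrow> 1 \<le> i \<and> i \<le> n \<and> 1 \<le> j \<and> j \<le> n \<and> i \<noteq> j"
| "pgen_ok n (Gam i j) \<longleftrightarrow> 1 \<le> i \<and> i \<le> n \<and> 1 \<le> j \<and> j \<le> n \<and> i \<noteq> j"

definition vdown :: "nat \<Rightarrow> nat \<Rightarrow> vgen word" where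
  "vdown i j = map (\<lambda>k. pos (V k)) (rev [Suc i..<j])"

definition vup :: "nat \<Rightarrow> nat \<Rightarrow> vgen word" where
  "vup i j = map (\<lambda>k. pos (V k)) [Suc i..<j]"

fun fusing :: "pgen \<Rightarrow> vgen word" where
  "fusing (Mu a b) =
     (if a < b then vdown a b @ [pos (Sig a), pos (V a)] @ vup a b
      else vdown b a @ [pos (V b), pos (Sig b), pos (V b), pos (V b)] @ vup b a)"
| "fusing (Gam a b) =
     (if a < b then vdown a b @ [pos (Tau a), pos (V a)] @ vup a b
      else vdown b a @ [pos (V b), pos (Tau b), pos (V b), pos (V b)] @ vup b a)"

definition vspg_rels :: "nat \<Rightarrow> (pgen word \<times> pgen word) set" where
  "vspg_rels n =
     {([pos (Mu i j), pos (Mu i k), pos (Mu j k)], [pos (Mu j k), pos (Mu i k), pos (Mu i j)])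
       | i j k. i \<in> {1..n} \<and> j \<in> {1..n} \<and> k \<in> {1..n} \<and> distinct [i, j, k]}
   \<union> {([pos (Mu i j), pos (Mu i k), pos (Gam j k)], [pos (Gam j k), pos (Mu i k), pos (Mu i j)])
       | i j k. i \<in> {1..n} \<and> j \<in> {1..n} \<and> k \<in> {1..n} \<and> distinct [i, j, k]}
   \<union> {([pos (Gam i j), pos (Mu i k), pos (Mu j k)], [pos (Mu j k), pos (Mu i k), pos (Gam i j)])
       | i j k. i \<in> {1..n} \<and> j \<in> {1..n} \<and> k \<in> {1..n} \<and> distinct [i, j, k]}
   \<union> {([pos (Mu i j), pos (Gam j i)], [pos (Gam i j), pos (Mu j i)])
       | i j. i \<in> {1..n} \<and> j \<in> {1..n} \<and> i \<noteq> j}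
   \<union> {([pos (Mu i j), pos (Mu k l)], [pos (Mu k l), pos (Mu i j)])
       | i j k l. i \<in> {1..n} \<and> j \<in> {1..n} \<and> k \<in> {1..n} \<and> l \<in> {1..n} \<and> distinct [i, j, k, l]}
   \<union> {([pos (Gam i j), pos (Gam k l)], [pos (Gam k l), pos (Gam i j)])
       | i j k l. i \<in> {1..n} \<and> j \<in> {1..n} \<and> k \<in> {1..n} \<and> l \<in> {1..n} \<and> distinct [i, j, k, l]}
   \<union> {([pos (Mu i j), pos (Gam k l)], [pos (Gam k l), pos (Mu i j)])
       | i j k l. i \<in> {1..n} \<and> j \<in> {1..n} \<and> k \<in> {1..n} \<and> l \<in> {1..n} \<and> distinct [i, j, k, l]}"

end

theory Submission
  imports Defs "HOL-Combinatorics.Permutations"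
begin

text \<open>
  This is the Reidemeister--Schreier method for the kernel of \<open>\<pi>\<close>, with the words in the
  \<open>v\<^sub>i\<close> as transversal. Conjugating a fusing string by \<open>v\<^sub>k\<close> gives the fusing
  string whose indices are relabelled by the transposition \<open>(k k+1)\<close>. Hence every word
  factors as a product of fusing strings followed by a word in the \<open>v\<^sub>i\<close>, and for a
  pure word this tail is trivial, because the \<open>v\<^sub>i\<close> satisfy the Coxeter relations of
  \<open>S\<^sub>n\<close>. The rewriting map, which reads off the fusing strings of a word while
  tracking the permutation of its prefix, sends each defining relation of \<open>VSG\<^sub>n\<close> to a
  consequence of the claimed relations and undoes the substitution of fusing strings; so the
  claimed relations are complete. Conversely, by the same relabelling each claimed relation
  among fusing strings reduces to indices \<open>1, \<dots>, 4\<close>, where it is checked by hand.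
\<close>

declare word_eq.refl[simp, intro] word_eq.trans[trans]

lemma word_eq_context: "word_eq R a b \<Longrightarrow> word_eq R (u @ a @ v) (u @ b @ v)"
proof (induction rule: word_eq.induct)
  case (refl w) then show ?case by (rule word_eq.refl)
next
  case (sym u' w) then show ?case by (blast intro: word_eq.sym)
next
  case (trans u' v' w) then show ?case by (metis word_eq.trans)
next
  case (cancel u' x b v')
  have "word_eq R ((u @ u') @ [(x, b), (x, \<not> b)] @ (v' @ v)) ((u @ u') @ (v' @ v))"
    by (rule word_eq.cancel)
  then show ?case by simp
next
  case (rel l r u' v')
  have "word_eq R ((u @ u') @ l @ (v' @ v)) ((u @ u') @ r @ (v' @ v))"
    by (rule word_eq.rel[OF rel])
  then show ?case by simp
qed

lemma word_eq_rewrite: "word_eq R l r \<Longrightarrow> xs = u @ l @ v \<Longrightarrow> ys = u @ r @ v \<Longrightarrow> word_eq R xs ys"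
  using word_eq_context by metis

lemma word_eq_rewrite_back: "word_eq R r l \<Longrightarrow> xs = u @ l @ v \<Longrightarrow> ys = u @ r @ v \<Longrightarrow> word_eq R xs ys"
  using word_eq_context word_eq.sym by metis

lemma word_eq_append: "word_eq R a b \<Longrightarrow> word_eq R c d \<Longrightarrow> word_eq R (a @ c) (b @ d)"
proof -
  assume 1: "word_eq R a b" and 2: "word_eq R c d"
  have "word_eq R ([] @ a @ c) ([] @ b @ c)" by (rule word_eq_context[OF 1])
  moreover have "word_eq R (b @ c @ []) (b @ d @ [])" by (rule word_eq_context[OF 2])
  ultimately show ?thesis by (auto intro: word_eq.trans)
qed

lemma word_eq_relI: "(l, r) \<in> R \<Longrightarrow> xs = u @ l @ v \<Longrightarrow> ys = u @ r @ v \<Longrightarrow> word_eq R xs ys"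
  using word_eq.rel by metis

lemma word_eq_cancelI: "xs = u @ [(x, b), (x, \<not> b)] @ v \<Longrightarrow> ys = u @ v \<Longrightarrow> word_eq R xs ys"
  using word_eq.cancel by metis

lemma inv_word_append[simp]: "inv_word (a @ b) = inv_word b @ inv_word a"
  by (simp add: inv_word_def)
lemma inv_word_Nil[simp]: "inv_word [] = []" by (simp add: inv_word_def)
lemma inv_word_Cons[simp]: "inv_word ((x, b) # w) = inv_word w @ [(x, \<not> b)]"
  by (simp add: inv_word_def)
lemma inv_word_inv_word[simp]: "inv_word (inv_word w) = w"
  by (induction w) auto

lemma word_eq_inv_right: "word_eq R (w @ inv_word w) []"
proof (induction w)
  case Nil then show ?case by simp
next
  case (Cons a w)
  obtain x b where a: "a = (x, b)" by (cases a)
  have "word_eq R ((a # w) @ inv_word (a # w)) ([a] @ (w @ inv_word w) @ [(x, \<not> b)])"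
    by (simp add: a)
  also have "word_eq R \<dots> ([a] @ [] @ [(x, \<not> b)])" by (rule word_eq_context[OF Cons])
  also have "word_eq R \<dots> []" by (rule word_eq_cancelI[where u="[]" and v="[]"]) (simp_all add: a)
  finally show ?case .
qed

lemma word_eq_inv_left: "word_eq R (inv_word w @ w) []"
  using word_eq_inv_right[of R "inv_word w"] by simp

lemma word_eq_inv_word: "word_eq R a b \<Longrightarrow> word_eq R (inv_word a) (inv_word b)"
proof -
  assume h: "word_eq R a b"
  have "word_eq R (inv_word a) (inv_word a @ b @ inv_word b)"
    using word_eq_append[OF word_eq.refl[of R "inv_word a"]
      word_eq.sym[OF word_eq_inv_right[of R b]]] by simp
  also have "word_eq R \<dots> (inv_word a @ a @ inv_word b)"
    by (rule word_eq_context[OF word_eq.sym[OF h]])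
  also have "word_eq R \<dots> ([] @ inv_word b)"
    using word_eq_append[OF word_eq_inv_left[of R a] word_eq.refl[of R "inv_word b"]] by simp
  finally show ?thesis by simp
qed

lemma word_eq_conj_left: "word_eq R (x @ d) (d @ y) \<Longrightarrow> word_eq R (inv_word d @ x) (y @ inv_word d)"
proof -
  assume h: "word_eq R (x @ d) (d @ y)"
  have "word_eq R (inv_word d @ x) (inv_word d @ x @ d @ inv_word d)"
    using word_eq_context[OF word_eq.sym[OF word_eq_inv_right[of R d]], of "inv_word d @ x" "[]"]
    by simp
  also have "word_eq R \<dots> (inv_word d @ (d @ y) @ inv_word d)"
    using word_eq_context[OF h, of "inv_word d" "inv_word d"] by simp
  also have "word_eq R \<dots> ((inv_word d @ d) @ y @ inv_word d)" by simp
  also have "word_eq R \<dots> ([] @ y @ inv_word d)"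
    by (rule word_eq_append[OF word_eq_inv_left word_eq.refl])
  finally show ?thesis by simp
qed

lemma word_eq_conj_inv: "word_eq R (a @ b) (c @ a) \<Longrightarrow> word_eq R (a @ inv_word b) (inv_word c @ a)"
proof -
  assume h: "word_eq R (a @ b) (c @ a)"
  have h2: "word_eq R (inv_word b @ inv_word a) (inv_word a @ inv_word c)"
    using word_eq_inv_word[OF h] by simp
  have "word_eq R (a @ inv_word b) (a @ inv_word b @ inv_word a @ a)"
    using word_eq_context[OF word_eq.sym[OF word_eq_inv_left[of R a]], of "a @ inv_word b" "[]"]
    by simp
  also have "word_eq R \<dots> (a @ (inv_word a @ inv_word c) @ a)"
    using word_eq_context[OF h2, of a a] by simp
  also have "word_eq R \<dots> ((a @ inv_word a) @ inv_word c @ a)" by simp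
  also have "word_eq R \<dots> ([] @ inv_word c @ a)"
    by (rule word_eq_append[OF word_eq_inv_right word_eq.refl])
  finally show ?thesis by simp
qed

lemma wsubst_Nil[simp]: "wsubst f [] = []" by (simp add: wsubst_def)
lemma wsubst_append[simp]: "wsubst f (a @ b) = wsubst f a @ wsubst f b" by (simp add: wsubst_def)
lemma wsubst_Cons[simp]: "wsubst f ((x, b) # w) = (if b then f x else inv_word (f x)) @ wsubst f w"
  by (simp add: wsubst_def)

lemma word_eq_wsubst:
  assumes "word_eq R' u1 u2"
    and "\<And>l r. (l, r) \<in> R' \<Longrightarrow> word_eq R (wsubst f l) (wsubst f r)"
  shows "word_eq R (wsubst f u1) (wsubst f u2)"
  using assms(1)
proof (induction rule: word_eq.induct)
  case (refl w) then show ?case by simp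
next
  case (sym u w) then show ?case by (blast intro: word_eq.sym)
next
  case (trans u v w) then show ?case by (blast intro: word_eq.trans)
next
  case (cancel u x b v)
  have c: "word_eq R (wsubst f [(x, b), (x, \<not> b)]) []"
    using word_eq_inv_right[of R "f x"] word_eq_inv_left[of R "f x"] by (cases b) auto
  show ?case using word_eq_context[OF c, of "wsubst f u" "wsubst f v"] by simp
next
  case (rel l r u v)
  show ?case using word_eq_context[OF assms(2)[OF rel], of "wsubst f u" "wsubst f v"] by simp
qed

declare pos_def[simp]

lemma adj_Suc: "adj i (Suc i)" "adj (Suc i) i" by (auto simp: adj_def)

lemma vsg_v_square: "1 \<le> i \<Longrightarrow> i < n \<Longrightarrow> word_eq (vsg_rels n) [(V i, True), (V i, True)] []"
  by (rule word_eq_relI[where u="[]" and v="[]"]) (auto simp: vsg_rels_def)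

lemma vsg_v_braid: "1 \<le> i \<Longrightarrow> i < n \<Longrightarrow> 1 \<le> j \<Longrightarrow> j < n \<Longrightarrow> adj i j \<Longrightarrow>
   word_eq (vsg_rels n) [(V i, True), (V j, True), (V i, True)]
     [(V j, True), (V i, True), (V j, True)]"
  by (rule word_eq_relI[where u="[]" and v="[]"]) (auto simp: vsg_rels_def)

lemma vsg_mixed_braid: "c = Sig \<or> c = Tau \<Longrightarrow> 1 \<le> i \<Longrightarrow> i < n \<Longrightarrow> 1 \<le> j \<Longrightarrow> j < n \<Longrightarrow> adj i j \<Longrightarrow>
   word_eq (vsg_rels n) [(V i, True), (c j, True), (V i, True)]
     [(V j, True), (c i, True), (V j, True)]"
  by (rule word_eq_relI[where u="[]" and v="[]"]) (auto simp: vsg_rels_def)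

lemma vsg_sigma_braid: "1 \<le> i \<Longrightarrow> i < n \<Longrightarrow> 1 \<le> j \<Longrightarrow> j < n \<Longrightarrow> adj i j \<Longrightarrow>
   word_eq (vsg_rels n) [(Sig i, True), (Sig j, True), (Sig i, True)]
     [(Sig j, True), (Sig i, True), (Sig j, True)]"
  by (rule word_eq_relI[where u="[]" and v="[]"]) (auto simp: vsg_rels_def)

lemma vsg_sigma_sigma_tau: "1 \<le> i \<Longrightarrow> i < n \<Longrightarrow> 1 \<le> j \<Longrightarrow> j < n \<Longrightarrow> adj i j \<Longrightarrow>
   word_eq (vsg_rels n) [(Sig i, True), (Sig j, True), (Tau i, True)]
     [(Tau j, True), (Sig i, True), (Sig j, True)]"
  by (rule word_eq_relI[where u="[]" and v="[]"]) (auto simp: vsg_rels_def)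

lemma vsg_sigma_tau_commute: "1 \<le> i \<Longrightarrow> i < n \<Longrightarrow>
   word_eq (vsg_rels n) [(Sig i, True), (Tau i, True)] [(Tau i, True), (Sig i, True)]"
  by (rule word_eq_relI[where u="[]" and v="[]"]) (auto simp: vsg_rels_def)

lemma vgen_family: "\<exists>g. g \<in> {Sig, Tau, V} \<and> x = g (vidx x)"
  by (cases x) auto

lemma vsg_far_commute: "vgen_ok n x \<Longrightarrow> vgen_ok n y \<Longrightarrow> far (vidx x) (vidx y) \<Longrightarrow>
   word_eq (vsg_rels n) [(x, True), (y, True)] [(y, True), (x, True)]"
proof -
  assume a: "vgen_ok n x" "vgen_ok n y" "far (vidx x) (vidx y)"
  obtain g where g: "g \<in> {Sig, Tau, V}" "x = g (vidx x)" using vgen_family by blast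
  obtain h where h: "h \<in> {Sig, Tau, V}" "y = h (vidx y)" using vgen_family by blast
  have "([pos (g (vidx x)), pos (h (vidx y))], [pos (h (vidx y)), pos (g (vidx x))]) \<in> vsg_rels n"
    unfolding vsg_rels_def using a g(1) h(1) unfolding vgen_ok_def
    by (intro UnI2) blast
  then show ?thesis
    by (intro word_eq_relI[where u="[]" and v="[]"]) (auto simp: g(2)[symmetric] h(2)[symmetric])
qed

definition vword_ok :: "nat \<Rightarrow> vgen word \<Rightarrow> bool" where
  "vword_ok n w \<longleftrightarrow> (\<forall>(x, b) \<in> set w. vgen_ok n x)"

lemma vword_ok_simps[simp]: "vword_ok n []" "vword_ok n ((x, b) # w) \<longleftrightarrow> vgen_ok n x \<and> vword_ok n w"
  "vword_ok n (a @ c) \<longleftrightarrow> vword_ok n a \<and> vword_ok n c" by (auto simp: vword_ok_def)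

lemma vsg_far_commute_word:
  assumes "vgen_ok n x" "\<forall>(y, b) \<in> set L. b \<and> vgen_ok n y \<and> far (vidx x) (vidx y)"
  shows "word_eq (vsg_rels n) ([(x, True)] @ L) (L @ [(x, True)])"
  using assms(2)
proof (induction L)
  case Nil then show ?case by simp
next
  case (Cons a L)
  obtain y b where a: "a = (y, b)" by (cases a)
  with Cons.prems have yb: "b" "vgen_ok n y" "far (vidx x) (vidx y)" by auto
  have "word_eq (vsg_rels n) ([(x, True)] @ a # L) ([(y, True), (x, True)] @ L)"
    using word_eq_context[OF vsg_far_commute[OF assms(1) yb(2,3)], of "[]" L] yb(1) a by simp
  also have "word_eq (vsg_rels n) \<dots> ([(y, True)] @ (L @ [(x, True)]))"
    using word_eq_context[OF Cons.IH, of "[(y,True)]" "[]"] Cons.prems by simp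
  finally show ?case using a yb(1) by simp
qed

lemma vsg_v_inverse: "1 \<le> i \<Longrightarrow> i < n \<Longrightarrow> word_eq (vsg_rels n) [(V i, False)] [(V i, True)]"
proof -
  assume i: "1 \<le> i" "i < n"
  have "word_eq (vsg_rels n) [(V i, False)] ([(V i, False)] @ [(V i, True), (V i, True)])"
    using word_eq_context[OF word_eq.sym[OF vsg_v_square[OF i]], of "[(V i, False)]" "[]"] by simp
  also have "word_eq (vsg_rels n) \<dots> [(V i, True)]"
    by (rule word_eq_cancelI[where u="[]" and v="[(V i, True)]" and b=False]) simp_all
  finally show ?thesis .
qed

abbreviation tr :: "nat \<Rightarrow> nat \<Rightarrow> nat" where "tr k \<equiv> transpose k (Suc k)"

lemma vsg_perm_Nil[simp]: "vsg_perm [] = id" by (simp add: vsg_perm_def)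
lemma vsg_perm_Cons[simp]: "vsg_perm ((x, b) # w) = tr (vidx x) \<circ> vsg_perm w"
  by (simp add: vsg_perm_def)
lemma vsg_perm_append[simp]: "vsg_perm (a @ b) = vsg_perm a \<circ> vsg_perm b"
  by (induction a) (auto simp: comp_assoc)

lemma vsg_perm_rev: "vsg_perm w \<circ> vsg_perm (rev w) = id"
proof (induction w)
  case Nil then show ?case by simp
next
  case (Cons a w)
  obtain x b where a: "a = (x, b)" by (cases a)
  have "\<And>z. vsg_perm w (vsg_perm (rev w) z) = z" using Cons by (simp add: fun_eq_iff)
  then show ?case by (simp add: a fun_eq_iff)
qed

lemma vsg_perm_flip: "vsg_perm (map (\<lambda>(x, b). (x, \<not> b)) w) = vsg_perm w"
  by (induction w) auto

lemma vsg_perm_inv_word: "vsg_perm w \<circ> vsg_perm (inv_word w) = id"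
  using vsg_perm_rev[of w] unfolding inv_word_def
  by (metis rev_map vsg_perm_flip)

lemma vsg_perm_inv_word_id: "vsg_perm w = id \<Longrightarrow> vsg_perm (inv_word w) = id"
  using vsg_perm_inv_word[of w] by simp

lemma vsg_perm_rev_apply: "vsg_perm w (vsg_perm (rev w) z) = z"
  using vsg_perm_rev[of w] by (simp add: fun_eq_iff)

lemma vup_rev: "vup a b = rev (vdown a b)"
  by (simp add: vup_def vdown_def rev_map)

lemma vsg_perm_fusing[simp]: "vsg_perm (fusing g) = id"
proof (cases g)
  case (Mu a b)
  then show ?thesis by (cases "a < b") (auto simp: vup_rev fun_eq_iff vsg_perm_rev_apply)
next
  case (Gam a b)
  then show ?thesis by (cases "a < b") (auto simp: vup_rev fun_eq_iff vsg_perm_rev_apply)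
qed

lemma vsg_perm_wsubst_fusing: "vsg_perm (wsubst fusing u) = id"
proof (induction u)
  case Nil then show ?case by simp
next
  case (Cons a u)
  obtain x b where a: "a = (x, b)" by (cases a)
  then show ?case using Cons vsg_perm_inv_word_id[OF vsg_perm_fusing[of x]] by simp
qed

lemma tr_braid: "adj i j \<Longrightarrow> tr i (tr j (tr i x)) = tr j (tr i (tr j x))"
  by (auto simp: adj_def transpose_def)

lemma tr_far_commute: "far i j \<Longrightarrow> tr i (tr j x) = tr j (tr i x)"
  by (auto simp: far_def transpose_def)

lemma vidx_family: "g \<in> {Sig, Tau, V} \<Longrightarrow> vidx (g i) = i" by auto

lemma vsg_rel_perm: "(l, r) \<in> vsg_rels n \<Longrightarrow> vsg_perm l = vsg_perm r"
  unfolding vsg_rels_def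
  by (elim UnE) (auto simp: fun_eq_iff vidx_family intro: tr_braid tr_far_commute)

lemma word_eq_vsg_perm: "word_eq (vsg_rels n) w1 w2 \<Longrightarrow> vsg_perm w1 = vsg_perm w2"
proof (induction rule: word_eq.induct)
  case (cancel u x b v)
  have "tr (vidx x) \<circ> (tr (vidx x) \<circ> vsg_perm v) = vsg_perm v"
    by (simp add: comp_assoc[symmetric])
  then show ?case by simp
next
  case (rel l r u v)
  then show ?case using vsg_rel_perm[OF rel] by simp
qed (auto intro: sym trans)

section \<open>Conjugating fusing strings by virtual generators\<close>

abbreviation vl :: "nat \<Rightarrow> vgen \<times> bool" where "vl i \<equiv> (V i, True)"
abbreviation cl :: "(nat \<Rightarrow> vgen) \<Rightarrow> nat \<Rightarrow> vgen \<times> bool" where "cl c i \<equiv> (c i, True)"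

definition vword :: "nat list \<Rightarrow> vgen word" where "vword ks = map vl ks"

lemma vword_simps[simp]: "vword [] = []" "vword (k # ks) = vl k # vword ks"
  "vword (a @ b) = vword a @ vword b"
  by (simp_all add: vword_def)

lemma vdown_vword: "vdown a b = vword (rev [Suc a..<b])" by (simp add: vdown_def vword_def)
lemma vup_vword: "vup a b = vword [Suc a..<b]" by (simp add: vup_def vword_def)

lemma vdown_empty: "b \<le> Suc a \<Longrightarrow> vdown a b = []" by (simp add: vdown_def)
lemma vup_empty: "b \<le> Suc a \<Longrightarrow> vup a b = []" by (simp add: vup_def)
lemma vdown_Suc: "a < b \<Longrightarrow> vdown a (Suc b) = vl b # vdown a b" by (simp add: vdown_def)
lemma vup_Suc: "a < b \<Longrightarrow> vup a (Suc b) = vup a b @ [vl b]" by (simp add: vup_def)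
lemma vdown_low: "Suc a < b \<Longrightarrow> vdown a b = vdown (Suc a) b @ [vl (Suc a)]"
  by (simp add: vdown_def upt_rec)
lemma vup_low: "Suc a < b \<Longrightarrow> vup a b = vl (Suc a) # vup (Suc a) b"
  by (simp add: vup_def upt_rec)
lemma vdown_mid: "Suc a \<le> k \<Longrightarrow> Suc (Suc k) \<le> b \<Longrightarrow>
   vdown a b = vdown (Suc k) b @ [vl (Suc k), vl k] @ vdown a k"
proof -
  assume h: "Suc a \<le> k" "Suc (Suc k) \<le> b"
  have 1: "[Suc a..<b] = [Suc a..<k] @ [k..<b]" using upt_add_eq_append[of "Suc a" k "b - k"] h
    by simp
  have 2: "[k..<b] = k # Suc k # [Suc (Suc k)..<b]" using h by (simp add: upt_conv_Cons)
  have "[Suc a..<b] = [Suc a..<k] @ [k, Suc k] @ [Suc (Suc k)..<b]"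
    using 1 2 by simp
  then show ?thesis by (simp add: vdown_def)
qed

lemma vdown_letters: "(y, bb) \<in> set (vdown a b) \<Longrightarrow> bb \<and> (\<exists>j. y = V j \<and> a < j \<and> j < b)"
  by (auto simp: vdown_def)
lemma vup_letters: "(y, bb) \<in> set (vup a b) \<Longrightarrow> bb \<and> (\<exists>j. y = V j \<and> a < j \<and> j < b)"
  by (auto simp: vup_def)

lemma inv_word_vword:
  "\<forall>k\<in>set ks. 1 \<le> k \<and> k < n \<Longrightarrow> word_eq (vsg_rels n) (inv_word (vword ks)) (vword (rev ks))"
proof (induction ks)
  case Nil then show ?case by simp
next
  case (Cons k ks)
  then have "word_eq (vsg_rels n) (inv_word (vword ks) @ [(V k, False)]) (vword (rev ks) @ [vl k])"
    by (intro word_eq_append vsg_v_inverse) auto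
  then show ?case by simp
qed

lemma v_square_cancelI:
  "1 \<le> k \<Longrightarrow> k < n \<Longrightarrow> xs = u @ [vl k, vl k] @ v \<Longrightarrow> ys = u @ v \<Longrightarrow> word_eq (vsg_rels n) xs ys"
  using word_eq_rewrite[OF vsg_v_square, of k n xs u v] by simp

lemma far_commuteI:
  assumes "vgen_ok n x" "\<forall>(y, b) \<in> set L. b \<and> vgen_ok n y \<and> far (vidx x) (vidx y)"
    and "xs = u @ [(x, True)] @ L @ v" "ys = u @ L @ [(x, True)] @ v"
  shows "word_eq (vsg_rels n) xs ys"
  using word_eq_context[OF vsg_far_commute_word[OF assms(1,2)], of u v] assms(3,4) by simp

lemma far_commuteI':
  assumes "vgen_ok n x" "\<forall>(y, b) \<in> set L. b \<and> vgen_ok n y \<and> far (vidx x) (vidx y)"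
    and "xs = u @ L @ [(x, True)] @ v" "ys = u @ [(x, True)] @ L @ v"
  shows "word_eq (vsg_rels n) xs ys"
  using word_eq.sym[OF far_commuteI[OF assms(1,2) assms(4,3)]] .

lemma v_commute_vdown:
  assumes "1 \<le> a" "Suc a \<le> k" "Suc (Suc k) \<le> b" "b \<le> n"
  shows "word_eq (vsg_rels n) ([vl k] @ vdown a b) (vdown a b @ [vl (Suc k)])"
proof -
  have "[vl k] @ vdown a b = [] @ [vl k] @ vdown (Suc k) b @ ([vl (Suc k), vl k] @ vdown a k)"
    using vdown_mid[OF assms(2,3)] by simp
  also have "word_eq (vsg_rels n) \<dots>
    ([] @ vdown (Suc k) b @ [vl k] @ ([vl (Suc k), vl k] @ vdown a k))"
    by (rule far_commuteI[where x="V k" and L="vdown (Suc k) b" and u="[]"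
      and v="[vl (Suc k), vl k] @ vdown a k"])
       (use assms in \<open>auto simp: vgen_ok_def far_def dest!: vdown_letters\<close>)
  also have "word_eq (vsg_rels n) \<dots> (vdown (Suc k) b @ [vl (Suc k), vl k, vl (Suc k)] @ vdown a k)"
    by (rule word_eq_rewrite[OF vsg_v_braid[of k n "Suc k"], where u="vdown (Suc k) b"])
      (use assms in \<open>simp_all add: adj_Suc\<close>)
  also have "word_eq (vsg_rels n) \<dots>
    ((vdown (Suc k) b @ [vl (Suc k), vl k]) @ vdown a k @ [vl (Suc k)] @ [])"
    by (rule far_commuteI[where x="V (Suc k)" and L="vdown a k"
      and u="vdown (Suc k) b @ [vl (Suc k), vl k]" and v="[]"])
       (use assms in \<open>auto simp: vgen_ok_def far_def dest!: vdown_letters\<close>)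
  also have "\<dots> = vdown a b @ [vl (Suc k)]"
    using vdown_mid[OF assms(2,3)] by simp
  finally show ?thesis .
qed

lemma vup_commute_v:
  assumes "1 \<le> a" "Suc a \<le> k" "Suc (Suc k) \<le> b" "b \<le> n"
  shows "word_eq (vsg_rels n) (vup a b @ [vl k]) ([vl (Suc k)] @ vup a b)"
proof -
  have ok: "\<forall>j\<in>set (rev [Suc a..<b]). 1 \<le> j \<and> j < n" using assms by auto
  have iv: "word_eq (vsg_rels n) (inv_word (vdown a b)) (vup a b)"
    using inv_word_vword[OF ok] by (simp add: vdown_vword vup_vword)
  have "word_eq (vsg_rels n) (vup a b @ [vl k]) (inv_word (vdown a b) @ [vl k])"
    by (rule word_eq_append[OF word_eq.sym[OF iv] word_eq.refl])
  also have "word_eq (vsg_rels n) \<dots> ([vl (Suc k)] @ inv_word (vdown a b))"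
    by (rule word_eq_conj_left[OF v_commute_vdown[OF assms]])
  also have "word_eq (vsg_rels n) \<dots> ([vl (Suc k)] @ vup a b)"
    by (rule word_eq_append[OF word_eq.refl iv])
  finally show ?thesis .
qed

context
  fixes n :: nat and c :: "nat \<Rightarrow> vgen"
  assumes c: "c = Sig \<or> c = Tau"
begin

lemma core_fwd_below:
  assumes "1 \<le> p" "Suc p < n"
  shows "word_eq (vsg_rels n) [vl p, cl c (Suc p), vl (Suc p), vl p]
    [vl (Suc p), cl c p, vl p, vl (Suc p)]"
proof -
  let ?a = "Suc p"
  have "word_eq (vsg_rels n) [vl p, cl c ?a, vl ?a, vl p] [vl p, cl c ?a, vl p, vl p, vl ?a, vl p]"
    by (rule word_eq_rewrite_back[OF vsg_v_square, where u="[vl p, cl c ?a]" and v="[vl ?a, vl p]"])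
      (use assms in simp_all)
  also have "word_eq (vsg_rels n) \<dots> [vl ?a, cl c p, vl ?a, vl p, vl ?a, vl p]"
    by (rule word_eq_rewrite[OF vsg_mixed_braid[OF c, of p n ?a], where u="[]"
      and v="[vl p, vl ?a, vl p]"]) (use assms in \<open>simp_all add: adj_Suc\<close>)
  also have "word_eq (vsg_rels n) \<dots> [vl ?a, cl c p, vl ?a, vl ?a, vl p, vl ?a]"
    by (rule word_eq_rewrite[OF vsg_v_braid[of p n ?a], where u="[vl ?a, cl c p, vl ?a]"
      and v="[]"]) (use assms in \<open>simp_all add: adj_Suc\<close>)
  also have "word_eq (vsg_rels n) \<dots> [vl ?a, cl c p, vl p, vl ?a]"
    by (rule word_eq_rewrite[OF vsg_v_square, where u="[vl ?a, cl c p]" and v="[vl p, vl ?a]"])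
      (use assms in simp_all)
  finally show ?thesis .
qed

lemma core_fwd_at:
  assumes "1 \<le> a" "Suc a < n"
  shows "word_eq (vsg_rels n) [vl a, vl (Suc a), cl c a, vl a, vl (Suc a), vl a]
    [cl c (Suc a), vl (Suc a)]"
proof -
  let ?q = "Suc a"
  have "word_eq (vsg_rels n) [vl a, vl ?q, cl c a, vl a, vl ?q, vl a]
    [vl a, vl a, cl c ?q, vl ?q, vl a, vl a]"
    by (rule word_eq_rewrite_back[OF core_fwd_below, where u="[vl a]" and v="[vl a]"])
      (use assms in simp_all)
  also have "word_eq (vsg_rels n) \<dots> [cl c ?q, vl ?q, vl a, vl a]"
    by (rule word_eq_rewrite[OF vsg_v_square, where u="[]" and v="[cl c ?q, vl ?q, vl a, vl a]"])
      (use assms in simp_all)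
  also have "word_eq (vsg_rels n) \<dots> [cl c ?q, vl ?q]"
    by (rule word_eq_rewrite[OF vsg_v_square, where u="[cl c ?q, vl ?q]" and v="[]"])
      (use assms in simp_all)
  finally show ?thesis .
qed

lemma core_rev_below:
  assumes "1 \<le> p" "Suc p < n"
  shows "word_eq (vsg_rels n) [vl p, vl (Suc p), cl c (Suc p), vl p]
    [vl (Suc p), vl p, cl c p, vl (Suc p)]"
proof -
  let ?a = "Suc p"
  have "word_eq (vsg_rels n) [vl p, vl ?a, cl c ?a, vl p] [vl p, vl ?a, vl p, vl p, cl c ?a, vl p]"
    by (rule word_eq_rewrite_back[OF vsg_v_square, where u="[vl p, vl ?a]" and v="[cl c ?a, vl p]"])
      (use assms in simp_all)
  also have "word_eq (vsg_rels n) \<dots> [vl p, vl ?a, vl p, vl ?a, cl c p, vl ?a]"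
    by (rule word_eq_rewrite[OF vsg_mixed_braid[OF c, of p n ?a], where u="[vl p, vl ?a, vl p]"
      and v="[]"]) (use assms in \<open>simp_all add: adj_Suc\<close>)
  also have "word_eq (vsg_rels n) \<dots> [vl ?a, vl p, vl ?a, vl ?a, cl c p, vl ?a]"
    by (rule word_eq_rewrite[OF vsg_v_braid[of p n ?a], where u="[]"
      and v="[vl ?a, cl c p, vl ?a]"]) (use assms in \<open>simp_all add: adj_Suc\<close>)
  also have "word_eq (vsg_rels n) \<dots> [vl ?a, vl p, cl c p, vl ?a]"
    by (rule word_eq_rewrite[OF vsg_v_square, where u="[vl ?a, vl p]" and v="[cl c p, vl ?a]"])
      (use assms in simp_all)
  finally show ?thesis .
qed

lemma core_rev_at:
  assumes "1 \<le> a" "Suc a < n"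
  shows "word_eq (vsg_rels n) [vl a, vl (Suc a), vl a, cl c a, vl (Suc a), vl a]
    [vl (Suc a), cl c (Suc a)]"
proof -
  let ?q = "Suc a"
  have "word_eq (vsg_rels n) [vl a, vl ?q, vl a, cl c a, vl ?q, vl a]
    [vl a, vl a, vl ?q, cl c ?q, vl a, vl a]"
    by (rule word_eq_rewrite_back[OF core_rev_below, where u="[vl a]" and v="[vl a]"])
      (use assms in simp_all)
  also have "word_eq (vsg_rels n) \<dots> [vl ?q, cl c ?q, vl a, vl a]"
    by (rule word_eq_rewrite[OF vsg_v_square, where u="[]" and v="[vl ?q, cl c ?q, vl a, vl a]"])
      (use assms in simp_all)
  also have "word_eq (vsg_rels n) \<dots> [vl ?q, cl c ?q]"
    by (rule word_eq_rewrite[OF vsg_v_square, where u="[vl ?q, cl c ?q]" and v="[]"])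
      (use assms in simp_all)
  finally show ?thesis .
qed

end

text \<open>For \<open>a < b\<close> the fusing strings on \<open>a, b\<close> have the shape \<open>vdown a b @ C @ vup a b\<close>
  with a core \<open>C\<close> of index \<open>a\<close>: \<open>[c\<^sub>a, v\<^sub>a]\<close> for \<open>\<mu>\<^sub>a\<^sub>b, \<gamma>\<^sub>a\<^sub>b\<close> and
  \<open>[v\<^sub>a, c\<^sub>a, v\<^sub>a, v\<^sub>a] = [v\<^sub>a, c\<^sub>a]\<close> for \<open>\<mu>\<^sub>b\<^sub>a, \<gamma>\<^sub>b\<^sub>a\<close>, where \<open>c\<close> is
  \<open>\<sigma>\<close> or \<open>\<tau>\<close>. Conjugation by \<open>v\<^sub>k\<close> is computed on this shape, by cases on the
  position of \<open>k\<close> relative to \<open>a\<close> and \<open>b\<close>.\<close>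

definition fusing_fwd :: "(nat \<Rightarrow> vgen) \<Rightarrow> nat \<Rightarrow> nat \<Rightarrow> vgen word" where
  "fusing_fwd c a b = vdown a b @ [cl c a, vl a] @ vup a b"
definition fusing_rev :: "(nat \<Rightarrow> vgen) \<Rightarrow> nat \<Rightarrow> nat \<Rightarrow> vgen word" where
  "fusing_rev c a b = vdown a b @ [vl a, cl c a, vl a, vl a] @ vup a b"
definition fusing_word :: "(nat \<Rightarrow> vgen) \<Rightarrow> nat \<Rightarrow> nat \<Rightarrow> vgen word" where
  "fusing_word c x y = (if x < y then fusing_fwd c x y else fusing_rev c y x)"

lemma fusing_eq_fusing_word: "fusing (Mu a b) = fusing_word Sig a b"
  "fusing (Gam a b) = fusing_word Tau a b"
  by (simp_all add: fusing_word_def fusing_fwd_def fusing_rev_def)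

lemma fusing_rev_reduce:
  "1 \<le> a \<Longrightarrow> a < n \<Longrightarrow> word_eq (vsg_rels n) (fusing_rev c a b) (vdown a b @ [vl a, cl c a] @ vup a b)"
  unfolding fusing_rev_def
    by (rule v_square_cancelI[where k=a and u="vdown a b @ [vl a, cl c a]" and v="vup a b"])
      simp_all

definition core_word :: "nat \<Rightarrow> nat \<Rightarrow> vgen word \<Rightarrow> bool" where
  "core_word n a C \<longleftrightarrow> (\<forall>(y, b) \<in> set C. b \<and> vgen_ok n y \<and> vidx y = a)"

lemma vconj_far:
  assumes "1 \<le> a" "a < b" "b \<le> n" "1 \<le> k" "k < n" "Suc k < a \<or> b < k" "core_word n a C"
  shows "word_eq (vsg_rels n) ([vl k] @ (vdown a b @ C @ vup a b) @ [vl k])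
    (vdown a b @ C @ vup a b)"
proof -
  have "word_eq (vsg_rels n) ([] @ [vl k] @ (vdown a b @ C @ vup a b) @ [vl k])
            ([] @ (vdown a b @ C @ vup a b) @ [vl k] @ [vl k])"
    by (rule far_commuteI[where x="V k" and L="vdown a b @ C @ vup a b" and u="[]" and v="[vl k]"])
      (use assms in \<open>auto simp: vgen_ok_def far_def core_word_def dest!: vdown_letters vup_letters\<close>)
  also have "word_eq (vsg_rels n) \<dots> ((vdown a b @ C @ vup a b) @ [])"
    by (rule v_square_cancelI[where k=k and u="vdown a b @ C @ vup a b" and v="[]"])
      (use assms in simp_all)
  finally show ?thesis by simp
qed

lemma vconj_inner:
  assumes "1 \<le> a" "Suc a \<le> k" "Suc (Suc k) \<le> b" "b \<le> n" "core_word n a C"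
  shows "word_eq (vsg_rels n) ([vl k] @ (vdown a b @ C @ vup a b) @ [vl k])
    (vdown a b @ C @ vup a b)"
proof -
  have "word_eq (vsg_rels n) ([vl k] @ (vdown a b @ C @ vup a b) @ [vl k])
     (vdown a b @ [vl (Suc k)] @ (C @ vup a b @ [vl k]))"
    by (rule word_eq_rewrite[OF v_commute_vdown[OF assms(1-4)], where u="[]"]) simp_all
  also have "word_eq (vsg_rels n) \<dots> ((vdown a b @ [vl (Suc k)] @ C) @ [vl (Suc k)] @ vup a b)"
    by (rule word_eq_rewrite[OF vup_commute_v[OF assms(1-4)], where u="vdown a b @ [vl (Suc k)] @ C"
      and v="[]"]) simp_all
  also have "word_eq (vsg_rels n) \<dots> (vdown a b @ C @ [vl (Suc k)] @ [vl (Suc k)] @ vup a b)"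
    by (rule far_commuteI[where x="V (Suc k)" and L=C and u="vdown a b"
      and v="[vl (Suc k)] @ vup a b"]) (use assms in \<open>auto simp: vgen_ok_def far_def core_word_def\<close>)
  also have "word_eq (vsg_rels n) \<dots> ((vdown a b @ C) @ vup a b)"
    by (rule v_square_cancelI[where k="Suc k" and u="vdown a b @ C" and v="vup a b"])
      (use assms in simp_all)
  finally show ?thesis by simp
qed

lemma vconj_upper_inner:
  assumes "Suc a < b" "b \<le> n" "1 \<le> a"
  shows "word_eq (vsg_rels n) ([vl (b - 1)] @ (vdown a b @ C @ vup a b) @ [vl (b - 1)])
      (vdown a (b - 1) @ C @ vup a (b - 1))"
proof -
  obtain b' where b: "b = Suc b'" using assms by (cases b) auto
  have ab: "a < b'" using assms b by simp
  have "[vl (b - 1)] @ (vdown a b @ C @ vup a b) @ [vl (b - 1)] =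
        [] @ [vl b', vl b'] @ (vdown a b' @ C @ vup a b' @ [vl b', vl b'])"
    by (simp add: b vdown_Suc[OF ab] vup_Suc[OF ab])
  also have "word_eq (vsg_rels n) \<dots> (vdown a b' @ C @ vup a b' @ [vl b', vl b'])"
    by (rule v_square_cancelI[where k=b' and u="[]"]) (use assms b in simp_all)
  also have "word_eq (vsg_rels n) \<dots> ((vdown a b' @ C @ vup a b') @ [])"
    by (rule v_square_cancelI[where k=b' and u="vdown a b' @ C @ vup a b'" and v="[]"])
      (use assms b in simp_all)
  finally show ?thesis by (simp add: b)
qed

lemma vconj_upper:
  assumes "a < b"
  shows "[vl b] @ (vdown a b @ C @ vup a b) @ [vl b] = vdown a (Suc b) @ C @ vup a (Suc b)"
  by (simp add: vdown_Suc[OF assms] vup_Suc[OF assms])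

lemma vconj_lower_outer:
  assumes "2 \<le> a" "a < b" "b \<le> n" "core_word n a C"
    and core: "word_eq (vsg_rels n) ([vl (a - 1)] @ C @ [vl (a - 1)]) ([vl a] @ C' @ [vl a])"
  shows "word_eq (vsg_rels n) ([vl (a - 1)] @ (vdown a b @ C @ vup a b) @ [vl (a - 1)])
      (vdown (a - 1) b @ C' @ vup (a - 1) b)"
proof -
  have "word_eq (vsg_rels n) ([] @ [vl (a - 1)] @ vdown a b @ (C @ vup a b @ [vl (a - 1)]))
     ([] @ vdown a b @ [vl (a - 1)] @ (C @ vup a b @ [vl (a - 1)]))"
    by (rule far_commuteI[where x="V (a - 1)" and L="vdown a b" and u="[]"
      and v="C @ vup a b @ [vl (a - 1)]"])
        (use assms in \<open>auto simp: vgen_ok_def far_def dest!: vdown_letters\<close>)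
  also have "word_eq (vsg_rels n) \<dots> ((vdown a b @ [vl (a - 1)] @ C) @ [vl (a - 1)] @ vup a b @ [])"
    by (rule far_commuteI'[where x="V (a - 1)" and L="vup a b" and u="vdown a b @ [vl (a - 1)] @ C"
      and v="[]"]) (use assms in \<open>auto simp: vgen_ok_def far_def dest!: vup_letters\<close>)
  also have "word_eq (vsg_rels n) \<dots> (vdown a b @ ([vl a] @ C' @ [vl a]) @ vup a b)"
    by (rule word_eq_rewrite[OF core, where u="vdown a b"]) simp_all
  also have "\<dots> = vdown (a - 1) b @ C' @ vup (a - 1) b"
    using assms vdown_low[of "a - 1" b] vup_low[of "a - 1" b] by simp
  finally show ?thesis by simp
qed

lemma vconj_lower:
  assumes "1 \<le> a" "Suc a < b" "b \<le> n"
    and core: "word_eq (vsg_rels n) ([vl a, vl (Suc a)] @ C @ [vl (Suc a), vl a]) C'"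
  shows "word_eq (vsg_rels n) ([vl a] @ (vdown a b @ C @ vup a b) @ [vl a])
      (vdown (Suc a) b @ C' @ vup (Suc a) b)"
proof -
  have "[vl a] @ (vdown a b @ C @ vup a b) @ [vl a] =
     [] @ [vl a] @ vdown (Suc a) b @ ([vl (Suc a)] @ C @ [vl (Suc a)] @ vup (Suc a) b @ [vl a])"
    using vdown_low[OF assms(2)] vup_low[OF assms(2)] by simp
  also have "word_eq (vsg_rels n) \<dots>
    ([] @ vdown (Suc a) b @ [vl a] @ ([vl (Suc a)] @ C @ [vl (Suc a)] @ vup (Suc a) b @ [vl a]))"
    by (rule far_commuteI[where x="V a" and L="vdown (Suc a) b" and u="[]"
      and v="[vl (Suc a)] @ C @ [vl (Suc a)] @ vup (Suc a) b @ [vl a]"])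
        (use assms in \<open>auto simp: vgen_ok_def far_def dest!: vdown_letters\<close>)
  also have "word_eq (vsg_rels n) \<dots>
    ((vdown (Suc a) b @ [vl a] @ [vl (Suc a)] @ C @ [vl (Suc a)]) @ [vl a] @ vup (Suc a) b @ [])"
    by (rule far_commuteI'[where x="V a" and L="vup (Suc a) b"
      and u="vdown (Suc a) b @ [vl a] @ [vl (Suc a)] @ C @ [vl (Suc a)]" and v="[]"])
        (use assms in \<open>auto simp: vgen_ok_def far_def dest!: vup_letters\<close>)
  also have "word_eq (vsg_rels n) \<dots> (vdown (Suc a) b @ C' @ vup (Suc a) b)"
    by (rule word_eq_rewrite[OF core, where u="vdown (Suc a) b"]) simp_all
  finally show ?thesis .
qed

lemma vconj_core_word:
  fixes C :: "nat \<Rightarrow> vgen word"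
  assumes ab: "1 \<le> a" "a < b" "b \<le> n" and k: "1 \<le> k" "k < n"
    and not_swap: "\<not> (k = a \<and> b = Suc a)"
    and core_ok: "\<And>a. 1 \<le> a \<Longrightarrow> a < n \<Longrightarrow> core_word n a (C a)"
    and core_below: "\<And>a. 1 \<le> a \<Longrightarrow> Suc a < n \<Longrightarrow>
      word_eq (vsg_rels n) ([vl a] @ C (Suc a) @ [vl a]) ([vl (Suc a)] @ C a @ [vl (Suc a)])"
    and core_at: "\<And>a. 1 \<le> a \<Longrightarrow> Suc a < n \<Longrightarrow>
      word_eq (vsg_rels n) ([vl a, vl (Suc a)] @ C a @ [vl (Suc a), vl a]) (C (Suc a))"
  shows "word_eq (vsg_rels n) ([vl k] @ (vdown a b @ C a @ vup a b) @ [vl k])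
           (vdown (tr k a) (tr k b) @ C (tr k a) @ vup (tr k a) (tr k b))"
proof -
  have Ca: "core_word n a (C a)" using core_ok ab by simp
  consider "Suc k < a \<or> b < k" | "k = a - 1" "2 \<le> a" | "k = a" "Suc a < b"
    | "Suc a \<le> k" "Suc (Suc k) \<le> b" | "k = b - 1" "Suc a < b" | "k = b"
    using ab k not_swap by linarith
  then show ?thesis
  proof cases
    case 1
    then have "tr k a = a" "tr k b = b" using ab by (auto simp: transpose_def)
    then show ?thesis using vconj_far[OF ab k 1 Ca] by simp
  next
    case 2
    then have "tr k a = a - 1" "tr k b = b" using ab by (auto simp: transpose_def)
    moreover have
      "word_eq (vsg_rels n) ([vl (a - 1)] @ C a @ [vl (a - 1)]) ([vl a] @ C (a - 1) @ [vl a])"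
      using core_below[of "a - 1"] 2 ab by simp
    ultimately show ?thesis using vconj_lower_outer[OF 2(2) ab(2,3) Ca] 2 by simp
  next
    case 3
    then have "tr k a = Suc a" "tr k b = b" by auto
    then show ?thesis using vconj_lower[OF ab(1) 3(2) ab(3) core_at] 3 ab by simp
  next
    case 4
    then have "tr k a = a" "tr k b = b" by (auto simp: transpose_def)
    then show ?thesis using vconj_inner[OF ab(1) 4 ab(3) Ca] by simp
  next
    case 5
    then have "tr k a = a" "tr k b = b - 1" by (auto simp: transpose_def)
    then show ?thesis using vconj_upper_inner[OF 5(2) ab(3,1)] 5 by simp
  next
    case 6
    then have "tr k a = a" "tr k b = Suc b" using ab by (auto simp: transpose_def)
    then show ?thesis using vconj_upper[OF ab(2)] 6 by simp
  qed
qed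

lemma tr_less_tr:
  assumes "a < b" "\<not> (k = a \<and> b = Suc a)"
  shows "tr k a < tr k b"
  using assms by (auto simp: transpose_def)

lemma vconj_fusing_fwd:
  assumes c: "c = Sig \<or> c = Tau" and ab: "1 \<le> a" "a < b" "b \<le> n" and k: "1 \<le> k" "k < n"
  shows "word_eq (vsg_rels n) ([vl k] @ fusing_fwd c a b @ [vl k])
    (fusing_word c (tr k a) (tr k b))"
proof (cases "k = a \<and> b = Suc a")
  case True
  then show ?thesis
    by (auto simp: fusing_word_def fusing_fwd_def fusing_rev_def vdown_empty vup_empty)
next
  case False
  have "word_eq (vsg_rels n) ([vl k] @ fusing_fwd c a b @ [vl k])
          (vdown (tr k a) (tr k b) @ [cl c (tr k a), vl (tr k a)] @ vup (tr k a) (tr k b))"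
    unfolding fusing_fwd_def
    by (rule vconj_core_word[where C="\<lambda>a. [cl c a, vl a]", OF ab k False])
       (use c core_fwd_below[OF c] core_fwd_at[OF c] in \<open>auto simp: core_word_def vgen_ok_def\<close>)
  then show ?thesis using tr_less_tr[OF ab(2) False] by (simp add: fusing_word_def fusing_fwd_def)
qed

lemma vconj_fusing_rev:
  assumes c: "c = Sig \<or> c = Tau" and ab: "1 \<le> a" "a < b" "b \<le> n" and k: "1 \<le> k" "k < n"
  shows "word_eq (vsg_rels n) ([vl k] @ fusing_rev c a b @ [vl k])
    (fusing_word c (tr k b) (tr k a))"
proof -
  have "word_eq (vsg_rels n) ([vl k] @ fusing_rev c a b @ [vl k])
          ([vl k] @ (vdown a b @ [vl a, cl c a] @ vup a b) @ [vl k])"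
    using ab by (intro word_eq_context fusing_rev_reduce) simp_all
  also have "word_eq (vsg_rels n) \<dots> (fusing_word c (tr k b) (tr k a))"
  proof (cases "k = a \<and> b = Suc a")
    case True
    then show ?thesis
      by (auto simp: fusing_word_def fusing_fwd_def vdown_empty vup_empty
          intro!: v_square_cancelI[where k=a and u="[]"]) (use ab in simp_all)
  next
    case False
    have "1 \<le> tr k a" "tr k b \<le> n"
      using ab k by (auto simp: transpose_def)
    with tr_less_tr[OF ab(2) False] have lt: "tr k a < tr k b" "1 \<le> tr k a" "tr k a < n"
      by simp_all
    have "word_eq (vsg_rels n) ([vl k] @ (vdown a b @ [vl a, cl c a] @ vup a b) @ [vl k])
            (vdown (tr k a) (tr k b) @ [vl (tr k a), cl c (tr k a)] @ vup (tr k a) (tr k b))"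
      by (rule vconj_core_word[where C="\<lambda>a. [vl a, cl c a]", OF ab k False])
         (use c core_rev_below[OF c] core_rev_at[OF c] in \<open>auto simp: core_word_def vgen_ok_def\<close>)
    also have "word_eq (vsg_rels n) \<dots> (fusing_rev c (tr k a) (tr k b))"
      by (rule word_eq.sym, rule fusing_rev_reduce) (use lt in simp_all)
    finally show ?thesis using lt by (simp add: fusing_word_def)
  qed
  finally show ?thesis .
qed

fun relabel :: "(nat \<Rightarrow> nat) \<Rightarrow> pgen \<Rightarrow> pgen" where
  "relabel p (Mu a b) = Mu (p a) (p b)"
| "relabel p (Gam a b) = Gam (p a) (p b)"

lemma relabel_relabel[simp]: "relabel p (relabel q g) = relabel (p \<circ> q) g" by (cases g) auto
lemma relabel_id[simp]: "relabel id g = g" by (cases g) auto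
lemma relabel_id'[simp]: "relabel (\<lambda>a. a) g = g" by (cases g) auto

lemma permutes_range: "p permutes {1..n} \<Longrightarrow> 1 \<le> x \<Longrightarrow> x \<le> n \<Longrightarrow> 1 \<le> p x \<and> p x \<le> n"
  using permutes_in_image[of p "{1..n}" x] by auto

lemma pgen_ok_relabel: assumes "p permutes {1..n}" "pgen_ok n g" shows "pgen_ok n (relabel p g)"
proof (cases g)
  case (Mu a b)
  then show ?thesis
    using assms(2) permutes_range[OF assms(1), of a] permutes_range[OF assms(1), of b]
      permutes_inj[OF assms(1)]
    by (auto simp: inj_eq)
next
  case (Gam a b)
  then show ?thesis
    using assms(2) permutes_range[OF assms(1), of a] permutes_range[OF assms(1), of b]
      permutes_inj[OF assms(1)]
    by (auto simp: inj_eq)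
qed

lemma vconj_fusing_word:
  assumes c: "c = Sig \<or> c = Tau" and ab: "1 \<le> a" "a \<le> n" "1 \<le> b" "b \<le> n" "a \<noteq> b"
    and k: "1 \<le> k" "k < n"
  shows "word_eq (vsg_rels n) ([vl k] @ fusing_word c a b @ [vl k])
    (fusing_word c (tr k a) (tr k b))"
proof (cases "a < b")
  case True
  then show ?thesis using vconj_fusing_fwd[OF c ab(1) True ab(4) k] by (simp add: fusing_word_def)
next
  case False
  then have "b < a" using ab(5) by simp
  then show ?thesis using vconj_fusing_rev[OF c ab(3) _ ab(2) k] False
    by (simp add: fusing_word_def)
qed

lemma vconj_fusing:
  assumes "pgen_ok n g" "1 \<le> k" "k < n"
  shows "word_eq (vsg_rels n) ([vl k] @ fusing g @ [vl k]) (fusing (relabel (tr k) g))"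
proof (cases g)
  case (Mu a b)
  then show ?thesis using assms vconj_fusing_word[of Sig a n b k]
    by (simp add: fusing_eq_fusing_word del: fusing.simps)
next
  case (Gam a b)
  then show ?thesis using assms vconj_fusing_word[of Tau a n b k]
    by (simp add: fusing_eq_fusing_word del: fusing.simps)
qed

lemma v_fusing_commute:
  assumes "pgen_ok n g" "1 \<le> k" "k < n"
  shows "word_eq (vsg_rels n) ([vl k] @ fusing g) (fusing (relabel (tr k) g) @ [vl k])"
proof -
  have "word_eq (vsg_rels n) ([vl k] @ fusing g) (([vl k] @ fusing g @ [vl k]) @ [vl k])"
    by (rule word_eq.sym, rule v_square_cancelI[where k=k and u="[vl k] @ fusing g" and v="[]"])
      (use assms in simp_all)
  also have "word_eq (vsg_rels n) \<dots> (fusing (relabel (tr k) g) @ [vl k])"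
    by (rule word_eq_append[OF vconj_fusing[OF assms] word_eq.refl])
  finally show ?thesis .
qed

abbreviation vperm :: "nat list \<Rightarrow> nat \<Rightarrow> nat" where "vperm ks \<equiv> vsg_perm (vword ks)"

definition vidx_list_ok :: "nat \<Rightarrow> nat list \<Rightarrow> bool" where
  "vidx_list_ok n ks \<longleftrightarrow> (\<forall>k\<in>set ks. 1 \<le> k \<and> k < n)"

lemma vidx_list_ok_append[simp]: "vidx_list_ok n (a @ b) \<longleftrightarrow> vidx_list_ok n a \<and> vidx_list_ok n b"
  by (auto simp: vidx_list_ok_def)
lemma vidx_list_ok_simps[simp]: "vidx_list_ok n []"
  "vidx_list_ok n (k # ks) \<longleftrightarrow> 1 \<le> k \<and> k < n \<and> vidx_list_ok n ks" by (auto simp: vidx_list_ok_def)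

lemma tr_permutes: "1 \<le> k \<Longrightarrow> k < n \<Longrightarrow> tr k permutes {1..n}"
  by (rule permutes_swap_id) auto

lemma vperm_permutes: "vidx_list_ok n ks \<Longrightarrow> vperm ks permutes {1..n}"
proof (induction ks)
  case Nil then show ?case using permutes_id[of "{1..n}"] by (simp add: id_def)
next
  case (Cons k ks)
  have "tr k permutes {1..n}" using Cons.prems by (intro tr_permutes) (auto simp: vidx_list_ok_def)
  moreover have "vperm ks permutes {1..n}" using Cons by (auto simp: vidx_list_ok_def)
  ultimately
  show ?case using permutes_compose[of "vperm ks" "{1..n}" "tr k"] by (simp add: comp_def)
qed

lemma vword_fusing_commute:
  assumes "vidx_list_ok n ks" "pgen_ok n g"
  shows "word_eq (vsg_rels n) (vword ks @ fusing g) (fusing (relabel (vperm ks) g) @ vword ks)"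
  using assms
proof (induction ks arbitrary: g)
  case Nil then show ?case by simp
next
  case (Cons k ks)
  have k: "1 \<le> k" "k < n" "vidx_list_ok n ks" using Cons.prems by (auto simp: vidx_list_ok_def)
  have okg: "pgen_ok n (relabel (vperm ks) g)"
    by (rule pgen_ok_relabel[OF vperm_permutes[OF k(3)] Cons.prems(2)])
  have "word_eq (vsg_rels n) (vword (k # ks) @ fusing g)
    ([vl k] @ (fusing (relabel (vperm ks) g) @ vword ks))"
    using word_eq_context[OF Cons.IH[OF k(3) Cons.prems(2)], of "[vl k]" "[]"] by simp
  also have "word_eq (vsg_rels n) \<dots>
    ((fusing (relabel (tr k) (relabel (vperm ks) g)) @ [vl k]) @ vword ks)"
    using word_eq_context[OF v_fusing_commute[OF okg k(1,2)], of "[]" "vword ks"] by simp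
  finally show ?case by (simp add: comp_def)
qed

lemma vword_fusing_inv_commute:
  assumes "vidx_list_ok n ks" "pgen_ok n g"
  shows "word_eq (vsg_rels n) (vword ks @ inv_word (fusing g))
    (inv_word (fusing (relabel (vperm ks) g)) @ vword ks)"
  by (rule word_eq_conj_inv[OF vword_fusing_commute[OF assms]])

section \<open>Virtual words with trivial permutation\<close>

definition desc_run :: "nat \<Rightarrow> nat \<Rightarrow> nat list" where "desc_run m j = rev [j..<Suc m]"

lemma desc_run_empty: "desc_run m (Suc m) = []" by (simp add: desc_run_def)
lemma desc_run_Cons: "j \<le> m \<Longrightarrow> desc_run m j = desc_run m (Suc j) @ [j]"
  by (simp add: desc_run_def upt_conv_Cons)
lemma desc_run_split:
  "j < k \<Longrightarrow> k \<le> m \<Longrightarrow> desc_run m j = desc_run m (Suc k) @ [k, k - 1] @ rev [j..<k - 1]"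
proof -
  assume h: "j < k" "k \<le> m"
  have 1: "[j..<Suc m] = [j..<k - 1] @ [k - 1..<Suc m]"
    using upt_add_eq_append[of j "k - 1" "Suc m - (k - 1)"] h by simp
  have 2: "[k - 1..<Suc m] = (k - 1) # k # [Suc k..<Suc m]" using h by (simp add: upt_conv_Cons)
  show ?thesis using 1 2 h by (simp add: desc_run_def)
qed

lemma desc_run_letters: "i \<in> set (desc_run m j) \<Longrightarrow> j \<le> i \<and> i \<le> m" by (auto simp: desc_run_def)

lemma vword_letters: "(y, b) \<in> set (vword ks) \<Longrightarrow> b \<and> (\<exists>i\<in>set ks. y = V i)" by (auto simp: vword_def)

lemma vword_desc_run_commute:
  assumes "m < n" "1 \<le> k" "Suc k < j" "j \<le> Suc m"
  shows "word_eq (vsg_rels n) (vword (desc_run m j) @ [vl k]) ([vl k] @ vword (desc_run m j))"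
  by (rule far_commuteI'[where x="V k" and L="vword (desc_run m j)" and u="[]" and v="[]"])
     (use assms in \<open>auto simp: vgen_ok_def far_def dest!: vword_letters desc_run_letters\<close>)

lemma vword_desc_run_shift:
  assumes "m < n" "1 \<le> j" "j < k" "k \<le> m"
  shows "word_eq (vsg_rels n) (vword (desc_run m j) @ [vl k]) ([vl (k - 1)] @ vword (desc_run m j))"
proof -
  let ?A = "vword (desc_run m (Suc k))" and ?B = "vword (rev [j..<k - 1])"
  have e: "vword (desc_run m j) = ?A @ [vl k, vl (k - 1)] @ ?B"
    using desc_run_split[OF assms(3,4)] by simp
  have "vword (desc_run m j) @ [vl k] = (?A @ [vl k, vl (k - 1)]) @ ?B @ [vl k] @ []"
    using e by simp
  also have "word_eq (vsg_rels n) \<dots> ((?A @ [vl k, vl (k - 1)]) @ [vl k] @ ?B @ [])"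
    by (rule far_commuteI'[where x="V k" and L="?B" and u="?A @ [vl k, vl (k - 1)]" and v="[]"])
       (use assms in \<open>auto simp: vgen_ok_def far_def dest!: vword_letters\<close>)
  also have "word_eq (vsg_rels n) \<dots> (?A @ [vl (k - 1), vl k, vl (k - 1)] @ ?B)"
    by (rule word_eq_rewrite[OF vsg_v_braid[of k n "k - 1"]]) (use assms in \<open>auto simp: adj_def\<close>)
  also have "word_eq (vsg_rels n) \<dots> ([] @ [vl (k - 1)] @ ?A @ [vl k, vl (k - 1)] @ ?B)"
    by (rule far_commuteI'[where x="V (k - 1)" and L="?A" and u="[]"
      and v="[vl k, vl (k - 1)] @ ?B"])
       (use assms in \<open>auto simp: vgen_ok_def far_def dest!: vword_letters desc_run_letters\<close>)
  also have "\<dots> = [vl (k - 1)] @ vword (desc_run m j)"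
    using e by simp
  finally show ?thesis .
qed

lemma vword_normal_form_snoc:
  assumes mn: "m < n" and nf: "vidx_list_ok m ks" "1 \<le> j" "j \<le> Suc m" and k: "1 \<le> k" "k \<le> m"
  shows "\<exists>ks' j'. vidx_list_ok m ks' \<and> 1 \<le> j' \<and> j' \<le> Suc m \<and>
           word_eq (vsg_rels n) (vword (ks @ desc_run m j) @ [vl k]) (vword (ks' @ desc_run m j'))"
proof -
  consider "j = Suc m" "k = m" | "j = Suc m" "k < m" | "j \<le> m" "k = j" | "j \<le> m" "Suc k = j"
    | "j \<le> m" "Suc k < j" | "j \<le> m" "j < k"
    using nf k by linarith
  then show ?thesis
  proof cases
    case 1
    then show ?thesis
      using nf k by (intro exI[of _ ks] exI[of _ m]) (simp add: desc_run_empty desc_run_Cons)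
  next
    case 2
    then show ?thesis
      using nf k by (intro exI[of _ "ks @ [k]"] exI[of _ "Suc m"]) (simp add: desc_run_empty)
  next
    case 3
    have "word_eq (vsg_rels n) (vword (ks @ desc_run m j) @ [vl k])
      (vword (ks @ desc_run m (Suc j)) @ [])"
      by (rule v_square_cancelI[where k=k and u="vword (ks @ desc_run m (Suc j))" and v="[]"])
         (use 3 k mn desc_run_Cons[OF 3(1)] in simp_all)
    then show ?thesis
      using 3 nf k by (intro exI[of _ ks] exI[of _ "Suc j"]) auto
  next
    case 4
    then have "vword (ks @ desc_run m j) @ [vl k] = vword (ks @ desc_run m k)"
      using k desc_run_Cons[of k m] by simp
    then show ?thesis
      using 4 nf k by (intro exI[of _ ks] exI[of _ k]) simp
  next
    case 5
    then show ?thesis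
      using word_eq_context[OF vword_desc_run_commute[OF mn k(1) 5(2) nf(3)], of "vword ks" "[]"] nf
        k
      by (intro exI[of _ "ks @ [k]"] exI[of _ j]) simp
  next
    case 6
    then show ?thesis
      using word_eq_context[OF vword_desc_run_shift[OF mn nf(2) 6(2) k(2)], of "vword ks" "[]"] nf k
      by (intro exI[of _ "ks @ [k - 1]"] exI[of _ j]) auto
  qed
qed

lemma vword_normal_form:
  assumes "m < n" "\<forall>k\<in>set ks. 1 \<le> k \<and> k \<le> m"
  shows "\<exists>ks' j. vidx_list_ok m ks' \<and> 1 \<le> j \<and> j \<le> Suc m \<and>
           word_eq (vsg_rels n) (vword ks) (vword (ks' @ desc_run m j))"
  using assms(2)
proof (induction ks rule: rev_induct)
  case Nil
  show ?case by (intro exI[of _ "[]"] exI[of _ "Suc m"]) (simp add: desc_run_empty)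
next
  case (snoc k ks)
  then obtain ks' j where nf: "vidx_list_ok m ks'" "1 \<le> j" "j \<le> Suc m"
    and eq: "word_eq (vsg_rels n) (vword ks) (vword (ks' @ desc_run m j))"
    by auto
  have "word_eq (vsg_rels n) (vword (ks @ [k])) (vword (ks' @ desc_run m j) @ [vl k])"
    using word_eq_append[OF eq word_eq.refl[of _ "[vl k]"]] by simp
  moreover obtain ks'' j' where "vidx_list_ok m ks''" "1 \<le> j'" "j' \<le> Suc m"
    "word_eq (vsg_rels n) (vword (ks' @ desc_run m j) @ [vl k]) (vword (ks'' @ desc_run m j'))"
    using vword_normal_form_snoc[OF assms(1) nf, of k] snoc.prems by auto
  ultimately show ?case by (blast intro: word_eq.trans)
qed

lemma vperm_fix: "\<forall>i\<in>set ks. i < m \<Longrightarrow> vperm ks (Suc m) = Suc m"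
  by (induction ks) (auto simp: transpose_def)

lemma desc_run_eq_Nil_if_vperm_id:
  assumes nf: "vidx_list_ok m ks" "1 \<le> j" "j \<le> Suc m" and id: "vperm (ks @ desc_run m j) = id"
  shows "j = Suc m"
proof (rule ccontr)
  assume "j \<noteq> Suc m"
  then have jm: "j \<le> m" using nf by simp
  have "desc_run m j = m # rev [j..<m]" using jm by (simp add: desc_run_def)
  moreover have "vperm (rev [j..<m]) (Suc m) = Suc m" by (rule vperm_fix) auto
  ultimately have "vperm ks m = vperm (ks @ desc_run m j) (Suc m)" by simp
  also have "\<dots> = Suc m" using id by simp
  moreover have "vperm ks m \<in> {1..m}"
    using vperm_permutes[OF nf(1)] jm nf(2) permutes_in_image by fastforce
  ultimately show False by simp
qed

lemma vword_perm_id_aux: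
  "m \<le> n \<Longrightarrow> \<forall>k\<in>set ks. 1 \<le> k \<and> k < m \<Longrightarrow> vperm ks = id \<Longrightarrow> word_eq (vsg_rels n) (vword ks) []"
proof (induction m arbitrary: ks)
  case 0 then show ?case by (cases ks) auto
next
  case (Suc m)
  have "m < n" "\<forall>k\<in>set ks. 1 \<le> k \<and> k \<le> m" using Suc.prems by auto
  then obtain ks' j where nf: "vidx_list_ok m ks'" "1 \<le> j" "j \<le> Suc m"
    and eq: "word_eq (vsg_rels n) (vword ks) (vword (ks' @ desc_run m j))"
    using vword_normal_form by blast
  have "vperm (ks' @ desc_run m j) = id" using word_eq_vsg_perm[OF eq] Suc.prems(3) by metis
  then have "j = Suc m" by (rule desc_run_eq_Nil_if_vperm_id[OF nf])
  then have "word_eq (vsg_rels n) (vword ks) (vword ks')" and "vperm ks' = id"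
    using eq Suc.prems(3) word_eq_vsg_perm[OF eq] by (simp_all add: desc_run_empty id_def)
  moreover have "word_eq (vsg_rels n) (vword ks') []"
    using Suc.IH[of ks'] Suc.prems nf(1) \<open>vperm ks' = id\<close> by (simp add: vidx_list_ok_def)
  ultimately show ?case by (blast intro: word_eq.trans)
qed

lemma vword_perm_id: "vidx_list_ok n ks \<Longrightarrow> vperm ks = id \<Longrightarrow> word_eq (vsg_rels n) (vword ks) []"
  by (rule vword_perm_id_aux[of n]) (auto simp: vidx_list_ok_def)

section \<open>Schreier rewriting\<close>

text \<open>Reidemeister--Schreier rewriting: the coset of a prefix is recorded by its permutation \<open>s\<close>,
  and a letter \<open>\<sigma>\<^sub>k\<close> (resp. \<open>\<tau>\<^sub>k\<close>) read in coset \<open>s\<close> becomes \<open>\<mu>\<close> (resp. \<open>\<gamma>\<close>) with indices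
  \<open>s k, s (k+1)\<close>, while the \<open>v\<^sub>k\<close> disappear. Letters with an index outside \<open>1..n-1\<close> are
  ignored.\<close>

definition vidx_ok :: "nat \<Rightarrow> nat \<Rightarrow> bool" where "vidx_ok n k \<longleftrightarrow> 1 \<le> k \<and> k < n"

fun schreier_step :: "nat \<Rightarrow> (nat \<Rightarrow> nat) \<Rightarrow> vgen \<times> bool \<Rightarrow> nat \<Rightarrow> nat" where
  "schreier_step n s (x, b) = (if vidx_ok n (vidx x) then s \<circ> tr (vidx x) else s)"

fun schreier_letter :: "nat \<Rightarrow> (nat \<Rightarrow> nat) \<Rightarrow> vgen \<times> bool \<Rightarrow> pgen word" where
  "schreier_letter n s (V k, b) = []"
| "schreier_letter n s (Sig k, b) =
  (if vidx_ok n k then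
    (if b then [(Mu (s k) (s (Suc k)), True)] else [(Mu (s (Suc k)) (s k), False)]) else [])"
| "schreier_letter n s (Tau k, b) =
  (if vidx_ok n k then
    (if b then [(Gam (s k) (s (Suc k)), True)] else [(Gam (s (Suc k)) (s k), False)]) else [])"

fun schreier_rewrite :: "nat \<Rightarrow> (nat \<Rightarrow> nat) \<Rightarrow> vgen word \<Rightarrow> pgen word" where
  "schreier_rewrite n s [] = []"
| "schreier_rewrite n s (l # w) = schreier_letter n s l @ schreier_rewrite n (schreier_step n s l)
  w"

fun schreier_perm :: "nat \<Rightarrow> (nat \<Rightarrow> nat) \<Rightarrow> vgen word \<Rightarrow> nat \<Rightarrow> nat" where
  "schreier_perm n s [] = s"
| "schreier_perm n s (l # w) = schreier_perm n (schreier_step n s l) w"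

lemma schreier_rewrite_append:
  "schreier_rewrite n s (a @ b) = schreier_rewrite n s a @ schreier_rewrite n (schreier_perm n s a)
    b"
  by (induction a arbitrary: s) auto

lemma schreier_perm_append: "schreier_perm n s (a @ b) = schreier_perm n (schreier_perm n s a) b"
  by (induction a arbitrary: s) auto

lemma schreier_perm_eq: "vword_ok n w \<Longrightarrow> schreier_perm n s w = s \<circ> vsg_perm w"
proof (induction w arbitrary: s)
  case Nil then show ?case by simp
next
  case (Cons l w)
  obtain x b where l: "l = (x, b)" by (cases l)
  have "vidx_ok n (vidx x)" "vword_ok n w" using Cons.prems l
    by (auto simp: vword_ok_def vgen_ok_def vidx_ok_def)
  then show ?case using Cons.IH l by (simp add: comp_assoc)
qed

definition vidx_list :: "vgen word \<Rightarrow> nat list" where "vidx_list w = map (\<lambda>(x, b). vidx x) w"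

lemma vidx_list_simps[simp]: "vidx_list [] = []" "vidx_list ((x, b) # w) = vidx x # vidx_list w"
  "vidx_list (a @ c) = vidx_list a @ vidx_list c"
  by (simp_all add: vidx_list_def)

lemma vperm_vidx_list: "vperm (vidx_list w) = vsg_perm w"
proof (induction w)
  case Nil then show ?case by simp
next
  case (Cons l w) then show ?case by (cases l) simp
qed

lemma vidx_list_ok_vidx_list: "vword_ok n w \<Longrightarrow> vidx_list_ok n (vidx_list w)"
  by (induction w) (auto simp: vword_ok_def vidx_list_ok_def vgen_ok_def vidx_list_def)

lemma schreier_step_permutes: "s permutes {1..n} \<Longrightarrow> schreier_step n s l permutes {1..n}"
proof -
  assume s: "s permutes {1..n}"
  obtain x b where l: "l = (x, b)" by (cases l)
  show ?thesis
  proof (cases "vidx_ok n (vidx x)")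
    case True
    then have t: "tr (vidx x) permutes {1..n}" by (intro tr_permutes) (auto simp: vidx_ok_def)
    show ?thesis using permutes_compose[OF t s] True l by simp
  qed (use s l in simp)
qed

lemma schreier_rewrite_pgen_ok:
  "s permutes {1..n} \<Longrightarrow> (\<forall>(g, b) \<in> set (schreier_rewrite n s w). pgen_ok n g)"
proof (induction w arbitrary: s)
  case Nil then show ?case by simp
next
  case (Cons l w)
  obtain x b where l: "l = (x, b)" by (cases l)
  have "\<forall>(g, b) \<in> set (schreier_letter n s l). pgen_ok n g"
  proof (cases x)
    case (Sig k)
    then show ?thesis
      using l permutes_range[OF Cons.prems, of k] permutes_range[OF Cons.prems, of "Suc k"]
      permutes_inj[OF Cons.prems] by (auto simp: vidx_ok_def inj_eq)
  next
    case (Tau k)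
    then show ?thesis
      using l permutes_range[OF Cons.prems, of k] permutes_range[OF Cons.prems, of "Suc k"]
      permutes_inj[OF Cons.prems] by (auto simp: vidx_ok_def inj_eq)
  qed (use l in simp)
  moreover have "\<forall>(g, b) \<in> set (schreier_rewrite n (schreier_step n s l) w). pgen_ok n g"
    by (rule Cons.IH[OF schreier_step_permutes[OF Cons.prems]])
  ultimately show ?case by (simp only: schreier_rewrite.simps set_append ball_Un)
qed

section \<open>Pure words are products of fusing strings\<close>

lemma fusing_letter_decomposition:
  assumes cm: "(c = Sig \<and> mk = Mu) \<or> (c = Tau \<and> mk = Gam)" and ks: "vidx_list_ok n ks"
    and k: "1 \<le> k" "k < n"
  shows "word_eq (vsg_rels n) (vword ks @ [(c k, b)])
    (wsubst fusing [if b then (relabel (vperm ks) (mk k (Suc k)), True)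
                    else (relabel (vperm (ks @ [k])) (mk k (Suc k)), False)] @ vword (ks @ [k]))"
proof -
  let ?g = "mk k (Suc k)"
  have fg: "fusing ?g = [cl c k, vl k]" using cm by (auto simp: vdown_empty vup_empty)
  have okg: "pgen_ok n ?g" using cm k by auto
  show ?thesis
  proof (cases b)
    case True
    have "word_eq (vsg_rels n) (vword ks @ [(c k, True)]) (vword ks @ fusing ?g @ [vl k])"
      unfolding fg
      by (rule word_eq.sym, rule v_square_cancelI[where k=k and u="vword ks @ [cl c k]" and v="[]"])
        (use k in simp_all)
    also have "word_eq (vsg_rels n) \<dots> (fusing (relabel (vperm ks) ?g) @ vword ks @ [vl k])"
      using word_eq_context[OF vword_fusing_commute[OF ks okg], of "[]" "[vl k]"] by simp
    finally show ?thesis using True by simp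
  next
    case False
    have "word_eq (vsg_rels n) (vword ks @ [(c k, False)])
      (vword (ks @ [k]) @ inv_word (fusing ?g))"
      unfolding fg
      by (rule word_eq.sym, rule word_eq_cancelI[where u="vword ks" and x="V k" and b=True])
        simp_all
    also have "word_eq (vsg_rels n) \<dots>
      (inv_word (fusing (relabel (vperm (ks @ [k])) ?g)) @ vword (ks @ [k]))"
      by (rule vword_fusing_inv_commute) (use ks k okg in simp_all)
    finally show ?thesis using False by simp
  qed
qed

lemma letter_decomposition:
  assumes ks: "vidx_list_ok n ks" and x: "vgen_ok n x"
  shows "word_eq (vsg_rels n) (vword ks @ [(x, b)])
           (wsubst fusing (schreier_letter n (vperm ks) (x, b)) @ vword (ks @ [vidx x]))"
proof (cases x)
  case (V k)
  have k: "1 \<le> k" "k < n" using x V by (auto simp: vgen_ok_def)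
  have "word_eq (vsg_rels n) [(V k, b)] [vl k]" by (cases b) (use k vsg_v_inverse in auto)
  then show ?thesis using V word_eq_append[OF word_eq.refl[of _ "vword ks"]] by simp
next
  case (Sig k)
  have k: "1 \<le> k" "k < n" using x Sig by (auto simp: vgen_ok_def)
  show ?thesis using fusing_letter_decomposition[where c=Sig and mk=Mu and b=b, OF _ ks k] Sig k
    by (cases b) (auto simp: vidx_ok_def comp_def)
next
  case (Tau k)
  have k: "1 \<le> k" "k < n" using x Tau by (auto simp: vgen_ok_def)
  show ?thesis using fusing_letter_decomposition[where c=Tau and mk=Gam and b=b, OF _ ks k] Tau k
    by (cases b) (auto simp: vidx_ok_def comp_def)
qed

lemma fusing_decomposition:
  assumes "vword_ok n w"
  shows "word_eq (vsg_rels n) w (wsubst fusing (schreier_rewrite n id w) @ vword (vidx_list w))"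
  using assms
proof (induction w rule: rev_induct)
  case Nil then show ?case by simp
next
  case (snoc l w)
  obtain x b where l: "l = (x, b)" by (cases l)
  have ok: "vword_ok n w" "vgen_ok n x" using snoc.prems l by auto
  have perm_w: "schreier_perm n id w = vperm (vidx_list w)" using schreier_perm_eq[OF ok(1)]
    by (simp add: vperm_vidx_list)
  have "word_eq (vsg_rels n) (w @ [l])
    (wsubst fusing (schreier_rewrite n id w) @ (vword (vidx_list w) @ [(x, b)]))"
    using word_eq_append[OF snoc.IH[OF ok(1)] word_eq.refl[of _ "[l]"]]
    by (simp only: l append_assoc)
  also have "word_eq (vsg_rels n) \<dots>
    (wsubst fusing (schreier_rewrite n id w) @
      (wsubst fusing (schreier_letter n (vperm (vidx_list w)) (x, b)) @ vword
        (vidx_list w @ [vidx x])))"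
    by (rule word_eq_append[OF word_eq.refl
      letter_decomposition[OF vidx_list_ok_vidx_list[OF ok(1)] ok(2)]])
  finally show ?case
    by (simp only: schreier_rewrite_append perm_w l wsubst_append append_assoc vidx_list_simps
      schreier_rewrite.simps append_Nil2)
qed

lemma fusing_generate_pure:
  assumes "vword_ok n w" "vsg_perm w = id"
  shows "\<exists>u. (\<forall>(x, b) \<in> set u. pgen_ok n x) \<and> word_eq (vsg_rels n) (wsubst fusing u) w"
proof -
  have d: "word_eq (vsg_rels n) w (wsubst fusing (schreier_rewrite n id w) @ vword (vidx_list w))"
    by (rule fusing_decomposition[OF assms(1)])
  have c: "word_eq (vsg_rels n) (vword (vidx_list w)) []"
    by (rule vword_perm_id)
      (use vidx_list_ok_vidx_list[OF assms(1)] vperm_vidx_list[of w] assms(2) in auto)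
  have "word_eq (vsg_rels n) w (wsubst fusing (schreier_rewrite n id w))"
    using word_eq.trans[OF d word_eq_append[OF word_eq.refl c]] by simp
  moreover have "\<forall>(x, b) \<in> set (schreier_rewrite n id w). pgen_ok n x"
    by (rule schreier_rewrite_pgen_ok) (rule permutes_id)
  ultimately show ?thesis by (blast intro: word_eq.sym)
qed

lemma schreier_letter_inverse:
  "schreier_letter n s (x, \<not> b) = inv_word (schreier_letter n (schreier_step n s (x, \<not> b)) (x, b))"
  by (cases x) (auto simp: transpose_def)

lemma schreier_step_twice: "schreier_step n (schreier_step n s (x, b')) (x, b) = s"
  by (auto simp: comp_assoc)

lemma schreier_rewrite_inv_word:
  "schreier_rewrite n s (inv_word w) = inv_word
    (schreier_rewrite n (schreier_perm n s (inv_word w)) w)"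
proof (induction w arbitrary: s)
  case Nil then show ?case by simp
next
  case (Cons l w)
  obtain x b where l: "l = (x, b)" by (cases l)
  let ?s1 = "schreier_perm n s (inv_word w)"
  have "schreier_rewrite n s (inv_word (l # w)) = inv_word (schreier_rewrite n ?s1 w) @
    schreier_letter n ?s1 (x, \<not> b)"
    using Cons.IH by (simp add: l schreier_rewrite_append)
  also have "\<dots> = inv_word (schreier_rewrite n (schreier_perm n s (inv_word (l # w))) (l # w))"
    using schreier_letter_inverse[of n ?s1 x b] schreier_step_twice[of n ?s1 x "\<not> b" b]
    by (simp add: l schreier_perm_append del: schreier_step.simps)
  finally show ?case .
qed

lemma schreier_rewrite_vword: "\<forall>(x, b) \<in> set w. \<exists>k. x = V k \<Longrightarrow> schreier_rewrite n s w = []"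
  by (induction w arbitrary: s) auto

lemma vsg_perm_vdown: "a < b \<Longrightarrow> vsg_perm (vdown a b) a = a \<and> vsg_perm (vdown a b) (Suc a) = b"
proof (induction b)
  case 0 then show ?case by simp
next
  case (Suc b)
  show ?case
  proof (cases "a < b")
    case True
    then show ?thesis using Suc.IH by (simp add: vdown_Suc transpose_def)
  next
    case False
    then have "b = a" using Suc by simp
    then show ?thesis by (simp add: vdown_empty)
  qed
qed

lemma vword_ok_vdown: "1 \<le> a \<Longrightarrow> b \<le> n \<Longrightarrow> vword_ok n (vdown a b)"
  by (auto simp: vword_ok_def vgen_ok_def vdown_def)
lemma vword_ok_vup: "1 \<le> a \<Longrightarrow> b \<le> n \<Longrightarrow> vword_ok n (vup a b)"
  by (auto simp: vword_ok_def vgen_ok_def vup_def)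

lemma schreier_rewrite_fwd_rev:
  assumes c: "(c = Sig \<and> mk = Mu) \<or> (c = Tau \<and> mk = Gam)" and ab: "1 \<le> a" "a < b" "b \<le> n"
  shows "schreier_rewrite n s (fusing_fwd c a b) = [(mk (s a) (s b), True)]"
    and "schreier_rewrite n s (fusing_rev c a b) = [(mk (s b) (s a), True)]"
proof -
  have V1: "schreier_rewrite n s' (vdown a b) = []" "schreier_rewrite n s' (vup a b) = []" for s'
    by (auto intro!: schreier_rewrite_vword dest!: vdown_letters vup_letters)
  have SD: "schreier_perm n s (vdown a b) = s \<circ> vsg_perm (vdown a b)"
    by (rule schreier_perm_eq[OF vword_ok_vdown[OF ab(1,3)]])
  have P: "vsg_perm (vdown a b) a = a" "vsg_perm (vdown a b) (Suc a) = b"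
    using vsg_perm_vdown[OF ab(2)] by auto
  have vidx_ok: "vidx_ok n a" using ab by (simp add: vidx_ok_def)
  show "schreier_rewrite n s (fusing_fwd c a b) = [(mk (s a) (s b), True)]"
    using c V1 SD P vidx_ok by (auto simp: fusing_fwd_def schreier_rewrite_append)
  show "schreier_rewrite n s (fusing_rev c a b) = [(mk (s b) (s a), True)]"
    using c V1 SD P vidx_ok by (auto simp: fusing_rev_def schreier_rewrite_append transpose_def)
qed

lemma schreier_rewrite_fusing_word:
  assumes c: "(c = Sig \<and> mk = Mu) \<or> (c = Tau \<and> mk = Gam)"
    and ab: "1 \<le> a" "a \<le> n" "1 \<le> b" "b \<le> n" "a \<noteq> b"
  shows "schreier_rewrite n s (fusing_word c a b) = [(mk (s a) (s b), True)]"
proof (cases "a < b")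
  case True
  then show ?thesis using schreier_rewrite_fwd_rev(1)[OF c, of a b n s] ab
    by (simp add: fusing_word_def)
next
  case False
  then show ?thesis using schreier_rewrite_fwd_rev(2)[OF c, of b a n s] ab
    by (simp add: fusing_word_def)
qed

lemma schreier_rewrite_fusing:
  assumes "pgen_ok n g"
  shows "schreier_rewrite n s (fusing g) = [(relabel s g, True)]"
proof (cases g)
  case (Mu a b)
  then show ?thesis using assms schreier_rewrite_fusing_word[of Sig Mu a n b s]
    by (simp add: fusing_eq_fusing_word del: fusing.simps)
next
  case (Gam a b)
  then show ?thesis using assms schreier_rewrite_fusing_word[of Tau Gam a n b s]
    by (simp add: fusing_eq_fusing_word del: fusing.simps)
qed

lemma vword_ok_fusing: "pgen_ok n g \<Longrightarrow> vword_ok n (fusing g)"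
  by (cases g) (auto simp: vword_ok_vdown vword_ok_vup vgen_ok_def)

lemma vword_ok_inv_word: "vword_ok n (inv_word w) = vword_ok n w"
  by (auto simp: vword_ok_def inv_word_def)

lemma schreier_perm_fusing: "pgen_ok n g \<Longrightarrow> schreier_perm n s (fusing g) = s"
  using schreier_perm_eq[OF vword_ok_fusing] by simp

lemma schreier_perm_fusing_inv: "pgen_ok n g \<Longrightarrow> schreier_perm n s (inv_word (fusing g)) = s"
  using schreier_perm_eq[of n "inv_word (fusing g)" s] vword_ok_fusing[of n g]
    vsg_perm_inv_word_id[OF vsg_perm_fusing[of g]]
  by (simp add: vword_ok_inv_word)

lemma schreier_rewrite_fusing_inv:
  "pgen_ok n g \<Longrightarrow> schreier_rewrite n s (inv_word (fusing g)) = [(relabel s g, False)]"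
  using schreier_rewrite_inv_word[of n s "fusing g"] schreier_perm_fusing_inv[of n g s]
    schreier_rewrite_fusing[of n g s] by simp

lemma schreier_rewrite_wsubst:
  "\<forall>(g, b) \<in> set u. pgen_ok n g
    \<Longrightarrow> schreier_rewrite n s (wsubst fusing u) = map (\<lambda>(g, b). (relabel s g, b)) u \<and> schreier_perm n s
      (wsubst fusing u) = s"
proof (induction u)
  case Nil then show ?case by simp
next
  case (Cons l u)
  obtain g b where l: "l = (g, b)" by (cases l)
  have ok: "pgen_ok n g" using Cons.prems l by auto
  show ?case using Cons ok l
    by (cases b) (auto simp: schreier_rewrite_append schreier_perm_append schreier_rewrite_fusing
      schreier_perm_fusing schreier_rewrite_fusing_inv schreier_perm_fusing_inv)
qed

lemma schreier_rewrite_wsubst_id: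
  "\<forall>(g, b) \<in> set u. pgen_ok n g \<Longrightarrow> schreier_rewrite n id (wsubst fusing u) = u"
proof -
  assume "\<forall>(g, b) \<in> set u. pgen_ok n g"
  then have "schreier_rewrite n id (wsubst fusing u) = map (\<lambda>(g, b). (relabel id g, b)) u"
    using schreier_rewrite_wsubst by blast
  also have "\<dots> = u" by (induction u) auto
  finally show ?thesis .
qed

lemma vspg_relI: "(l, r) \<in> vspg_rels n \<Longrightarrow> word_eq (vspg_rels n) l r"
  using word_eq.rel[of l r "vspg_rels n" "[]" "[]"] by simp

abbreviation "inN n x \<equiv> 1 \<le> x \<and> x \<le> n"

lemma vspg_mu_triple: "inN n a \<Longrightarrow> inN n b \<Longrightarrow> inN n c \<Longrightarrow> distinct [a, b, c] \<Longrightarrow>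
  word_eq (vspg_rels n) [(Mu a b, True), (Mu a c, True), (Mu b c, True)]
    [(Mu b c, True), (Mu a c, True), (Mu a b, True)]"
  by (rule vspg_relI) (auto simp: vspg_rels_def)
lemma vspg_mu_mu_gam: "inN n a \<Longrightarrow> inN n b \<Longrightarrow> inN n c \<Longrightarrow> distinct [a, b, c] \<Longrightarrow>
  word_eq (vspg_rels n) [(Mu a b, True), (Mu a c, True), (Gam b c, True)]
    [(Gam b c, True), (Mu a c, True), (Mu a b, True)]"
  by (rule vspg_relI) (auto simp: vspg_rels_def)
lemma vspg_gam_mu_mu: "inN n a \<Longrightarrow> inN n b \<Longrightarrow> inN n c \<Longrightarrow> distinct [a, b, c] \<Longrightarrow>
  word_eq (vspg_rels n) [(Gam a b, True), (Mu a c, True), (Mu b c, True)]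
    [(Mu b c, True), (Mu a c, True), (Gam a b, True)]"
  by (rule vspg_relI) (auto simp: vspg_rels_def)
lemma vspg_mu_gam_swap: "inN n a \<Longrightarrow> inN n b \<Longrightarrow> a \<noteq> b \<Longrightarrow>
  word_eq (vspg_rels n) [(Mu a b, True), (Gam b a, True)] [(Gam a b, True), (Mu b a, True)]"
  by (rule vspg_relI) (auto simp: vspg_rels_def)
lemma vspg_mu_mu_far: "inN n a \<Longrightarrow> inN n b \<Longrightarrow> inN n c \<Longrightarrow> inN n d \<Longrightarrow> distinct [a, b, c, d] \<Longrightarrow>
  word_eq (vspg_rels n) [(Mu a b, True), (Mu c d, True)] [(Mu c d, True), (Mu a b, True)]"
  by (rule vspg_relI) (auto simp: vspg_rels_def)
lemma vspg_gam_gam_far: "inN n a \<Longrightarrow> inN n b \<Longrightarrow> inN n c \<Longrightarrow> inN n d \<Longrightarrow> distinct [a, b, c, d] \<Longrightarrow>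
  word_eq (vspg_rels n) [(Gam a b, True), (Gam c d, True)] [(Gam c d, True), (Gam a b, True)]"
  by (rule vspg_relI) (auto simp: vspg_rels_def)
lemma vspg_mu_gam_far: "inN n a \<Longrightarrow> inN n b \<Longrightarrow> inN n c \<Longrightarrow> inN n d \<Longrightarrow> distinct [a, b, c, d] \<Longrightarrow>
  word_eq (vspg_rels n) [(Mu a b, True), (Gam c d, True)] [(Gam c d, True), (Mu a b, True)]"
  by (rule vspg_relI) (auto simp: vspg_rels_def)
lemma vspg_gam_mu_far: "inN n a \<Longrightarrow> inN n b \<Longrightarrow> inN n c \<Longrightarrow> inN n d \<Longrightarrow> distinct [a, b, c, d] \<Longrightarrow>
  word_eq (vspg_rels n) [(Gam c d, True), (Mu a b, True)] [(Mu a b, True), (Gam c d, True)]"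
  by (rule word_eq.sym, rule vspg_mu_gam_far)

context
  fixes n :: nat and s :: "nat \<Rightarrow> nat"
  assumes s: "s permutes {1..n}"
begin

lemma s_range: "1 \<le> x \<Longrightarrow> x \<le> n \<Longrightarrow> 1 \<le> s x \<and> s x \<le> n"
  by (rule permutes_range[OF s])

lemma s_inj: "s x = s y \<longleftrightarrow> x = y"
  using permutes_inj[OF s] by (simp add: inj_eq)

lemma schreier_rewrite_v_square: "(l, r) \<in> {([pos (V i), pos (V i)], []) | i. 1 \<le> i \<and> i < n}
   \<Longrightarrow> word_eq (vspg_rels n) (schreier_rewrite n s l) (schreier_rewrite n s r)"
  by auto

lemma schreier_rewrite_sigma_tau:
  "(l, r) \<in> {([pos (Sig i), pos (Tau i)], [pos (Tau i), pos (Sig i)]) | i. 1 \<le> i \<and> i < n}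
   \<Longrightarrow> word_eq (vspg_rels n) (schreier_rewrite n s l) (schreier_rewrite n s r)"
proof -
  assume "(l, r) \<in> {([pos (Sig i), pos (Tau i)], [pos (Tau i), pos (Sig i)]) | i. 1 \<le> i \<and> i < n}"
  then obtain i where i: "l = [pos (Sig i), pos (Tau i)]" "r = [pos (Tau i), pos (Sig i)]" "1 \<le> i"
    "i < n" by blast
  show ?thesis using vspg_mu_gam_swap[where n=n and a="s i" and b="s (Suc i)"] s_range[of i]
    s_range[of "Suc i"] s_inj[of i "Suc i"] i
    by (simp add: vidx_ok_def)
qed

lemma adj_cases: "adj i j \<Longrightarrow> (j = Suc i \<Longrightarrow> P) \<Longrightarrow> (i = Suc j \<Longrightarrow> P) \<Longrightarrow> P"
  by (auto simp: adj_def)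

lemma schreier_rewrite_sigma_braid:
  "(l, r) \<in> {([pos (Sig i), pos (Sig j), pos (Sig i)], [pos (Sig j), pos (Sig i), pos (Sig j)])
       | i j. 1 \<le> i \<and> i < n \<and> 1 \<le> j \<and> j < n \<and> adj i j}
   \<Longrightarrow> word_eq (vspg_rels n) (schreier_rewrite n s l) (schreier_rewrite n s r)"
proof -
  assume "(l, r) \<in>
    {([pos (Sig i), pos (Sig j), pos (Sig i)], [pos (Sig j), pos (Sig i), pos (Sig j)])
       | i j. 1 \<le> i \<and> i < n \<and> 1 \<le> j \<and> j < n \<and> adj i j}"
  then obtain i j where ij: "l = [pos (Sig i), pos (Sig j), pos (Sig i)]"
    "r = [pos (Sig j), pos (Sig i), pos (Sig j)]"
    "1 \<le> i" "i < n" "1 \<le> j" "j < n" "adj i j" by blast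
  have gen: "word_eq (vspg_rels n)
    (schreier_rewrite n s [pos (Sig a), pos (Sig (Suc a)), pos (Sig a)])
     (schreier_rewrite n s [pos (Sig (Suc a)), pos (Sig a), pos (Sig (Suc a))])" if a: "1 \<le> a" "Suc
       a < n" for a
    using vspg_mu_triple[where n=n and a="s a" and b="s (Suc a)" and c="s (Suc (Suc a))"]
      s_range[of a] s_range[of "Suc a"] s_range[of "Suc (Suc a)"]
      s_inj[of a "Suc a"] s_inj[of a "Suc (Suc a)"] s_inj[of "Suc a" "Suc (Suc a)"] a
    by (simp add: vidx_ok_def transpose_def)
  show ?thesis using ij(7)
  proof (rule adj_cases)
    assume "j = Suc i" then show ?thesis using gen[of i] ij by simp
  next
    assume "i = Suc j" then show ?thesis using word_eq.sym[OF gen[of j]] ij by simp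
  qed
qed

lemma schreier_rewrite_v_braid:
  "(l, r) \<in> {([pos (V i), pos (V j), pos (V i)], [pos (V j), pos (V i), pos (V j)])
       | i j. 1 \<le> i \<and> i < n \<and> 1 \<le> j \<and> j < n \<and> adj i j}
   \<Longrightarrow> word_eq (vspg_rels n) (schreier_rewrite n s l) (schreier_rewrite n s r)"
  by auto

lemma schreier_rewrite_mixed_braid:
  "c = Sig \<or> c = Tau
    \<Longrightarrow> (l, r) \<in> {([pos (V i), pos (c j), pos (V i)], [pos (V j), pos (c i), pos (V j)])
       | i j. 1 \<le> i \<and> i < n \<and> 1 \<le> j \<and> j < n \<and> adj i j}
   \<Longrightarrow> word_eq (vspg_rels n) (schreier_rewrite n s l) (schreier_rewrite n s r)"
  by (auto simp: vidx_ok_def transpose_def adj_def)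

lemma schreier_rewrite_sigma_sigma_tau:
  "(l, r) \<in> {([pos (Sig i), pos (Sig j), pos (Tau i)], [pos (Tau j), pos (Sig i), pos (Sig j)])
       | i j. 1 \<le> i \<and> i < n \<and> 1 \<le> j \<and> j < n \<and> adj i j}
   \<Longrightarrow> word_eq (vspg_rels n) (schreier_rewrite n s l) (schreier_rewrite n s r)"
proof -
  assume "(l, r) \<in>
    {([pos (Sig i), pos (Sig j), pos (Tau i)], [pos (Tau j), pos (Sig i), pos (Sig j)])
       | i j. 1 \<le> i \<and> i < n \<and> 1 \<le> j \<and> j < n \<and> adj i j}"
  then obtain i j where ij: "l = [pos (Sig i), pos (Sig j), pos (Tau i)]"
    "r = [pos (Tau j), pos (Sig i), pos (Sig j)]"
    "1 \<le> i" "i < n" "1 \<le> j" "j < n" "adj i j" by blast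
  have facts: "1 \<le> s a \<and> s a \<le> n" "1 \<le> s (Suc a) \<and> s (Suc a) \<le> n"
    "1 \<le> s (Suc (Suc a)) \<and> s (Suc (Suc a)) \<le> n"
     "s a \<noteq> s (Suc a)" "s a \<noteq> s (Suc (Suc a))" "s (Suc a) \<noteq> s (Suc (Suc a))" if a: "1 \<le> a"
       "Suc a < n" for a
    using s_range[of a] s_range[of "Suc a"] s_range[of "Suc (Suc a)"] s_inj[of a "Suc a"]
      s_inj[of a "Suc (Suc a)"] s_inj[of "Suc a" "Suc (Suc a)"] a
    by auto
  show ?thesis using ij(7)
  proof (rule adj_cases)
    assume "j = Suc i"
    then show ?thesis
      using vspg_mu_mu_gam[where n=n and a="s i" and b="s (Suc i)" and c="s (Suc (Suc i))"]
        facts[of i] ij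
      by (simp add: vidx_ok_def transpose_def)
  next
    assume "i = Suc j"
    then show ?thesis
      using word_eq.sym[OF
        vspg_gam_mu_mu[where n=n and a="s j" and b="s (Suc j)" and c="s (Suc (Suc j))"]] facts[of j]
          ij
      by (simp add: vidx_ok_def transpose_def)
  qed
qed

lemma schreier_rewrite_far: "(l, r) \<in> {([pos (g i), pos (h j)], [pos (h j), pos (g i)])
       | g h i j. g \<in> {Sig, Tau, V} \<and> h \<in> {Sig, Tau, V}
                 \<and> 1 \<le> i \<and> i < n \<and> 1 \<le> j \<and> j < n \<and> far i j}
   \<Longrightarrow> word_eq (vspg_rels n) (schreier_rewrite n s l) (schreier_rewrite n s r)"
proof -
  assume "(l, r) \<in> {([pos (g i), pos (h j)], [pos (h j), pos (g i)])
       | g h i j. g \<in> {Sig, Tau, V} \<and> h \<in> {Sig, Tau, V}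
                 \<and> 1 \<le> i \<and> i < n \<and> 1 \<le> j \<and> j < n \<and> far i j}"
  then obtain g h i j where ij: "l = [pos (g i), pos (h j)]" "r = [pos (h j), pos (g i)]"
    "g \<in> {Sig, Tau, V}" "h \<in> {Sig, Tau, V}" "1 \<le> i" "i < n" "1 \<le> j" "j < n" "far i j" by blast
  have t: "tr i j = j" "tr i (Suc j) = Suc j" "tr j i = i" "tr j (Suc i) = Suc i"
    using ij(9) by (auto simp: far_def transpose_def)
  have d: "distinct [s i, s (Suc i), s j, s (Suc j)]" using ij(9) s_inj by (auto simp: far_def)
  have r: "inN n (s i)" "inN n (s (Suc i))" "inN n (s j)" "inN n (s (Suc j))"
    using s_range[of i] s_range[of "Suc i"] s_range[of j] s_range[of "Suc j"] ij by auto
  have d': "distinct [s j, s (Suc j), s i, s (Suc i)]" using d by auto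
  show ?thesis using ij(3,4) unfolding ij(1,2)
    by (auto simp: vidx_ok_def t ij(5-8) intro: vspg_mu_mu_far[OF r d] vspg_gam_gam_far[OF r d]
      vspg_mu_gam_far[OF r d] vspg_gam_mu_far[OF r(3,4,1,2) d'])
qed

lemma schreier_rewrite_vsg_rel:
  "(l, r) \<in> vsg_rels n \<Longrightarrow> word_eq (vspg_rels n) (schreier_rewrite n s l) (schreier_rewrite n s r)"
  unfolding vsg_rels_def
  by (elim UnE; (erule schreier_rewrite_v_square schreier_rewrite_sigma_tau
      schreier_rewrite_sigma_braid schreier_rewrite_v_braid schreier_rewrite_sigma_sigma_tau
      schreier_rewrite_far | erule schreier_rewrite_mixed_braid[rotated]; simp))

end

lemma vsg_rel_vword_ok: "(l, r) \<in> vsg_rels n \<Longrightarrow> vword_ok n l \<and> vword_ok n r"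
  unfolding vsg_rels_def by (auto simp: vword_ok_def vgen_ok_def)

lemma schreier_perm_permutes: "s permutes {1..n} \<Longrightarrow> schreier_perm n s w permutes {1..n}"
proof (induction w arbitrary: s)
  case Nil then show ?case by simp
next
  case (Cons l w)
  have "schreier_step n s l permutes {1..n}" by (rule schreier_step_permutes[OF Cons.prems])
  then show ?case using Cons.IH by (simp del: schreier_step.simps)
qed

lemma schreier_rewrite_cancel:
  "word_eq R (schreier_rewrite n s [(x, b), (x, \<not> b)]) [] \<and> schreier_perm n s [(x, b), (x, \<not> b)] =
    s"
proof -
  let ?t = "schreier_step n s (x, b)"
  have returns: "schreier_step n ?t (x, \<not> b) = s" by (rule schreier_step_twice)
  then have "schreier_rewrite n s [(x, b), (x, \<not> b)] = schreier_letter n s (x, b) @ inv_word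
    (schreier_letter n s (x, b))"
    using schreier_letter_inverse[of n ?t x b] by (simp del: schreier_step.simps)
  then show ?thesis using returns word_eq_inv_right by (simp del: schreier_step.simps)
qed

lemma schreier_rewrite_in_context:
  assumes "word_eq R (schreier_rewrite n (schreier_perm n s u) p)
    (schreier_rewrite n (schreier_perm n s u) q)"
    and "schreier_perm n (schreier_perm n s u) p = schreier_perm n (schreier_perm n s u) q"
  shows "word_eq R (schreier_rewrite n s (u @ p @ v)) (schreier_rewrite n s (u @ q @ v))
       \<and> schreier_perm n s (u @ p @ v) = schreier_perm n s (u @ q @ v)"
  using word_eq_context[OF assms(1), of "schreier_rewrite n s u"] assms(2)
  by (simp add: schreier_rewrite_append schreier_perm_append del: schreier_rewrite.simps
    schreier_perm.simps)

lemma word_eq_schreier_rewrite: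
  assumes "word_eq (vsg_rels n) w1 w2"
  shows "\<forall>s. s permutes {1..n} \<longrightarrow> word_eq (vspg_rels n) (schreier_rewrite n s w1)
    (schreier_rewrite n s w2)
           \<and> schreier_perm n s w1 = schreier_perm n s w2"
  using assms
proof (induction rule: word_eq.induct)
  case (sym u w) then show ?case by (auto intro: word_eq.sym)
next
  case (trans u v w) then show ?case by (auto intro: word_eq.trans)
next
  case (cancel u x b v)
  show ?case
    using schreier_rewrite_in_context[where p="[(x, b), (x, \<not> b)]" and q="[]" and u=u and v=v]
      schreier_rewrite_cancel by simp
next
  case (rel l r u v)
  show ?case
  proof (intro allI impI)
    fix s :: "nat \<Rightarrow> nat" assume "s permutes {1..n}"
    then have s': "schreier_perm n s u permutes {1..n}" by (rule schreier_perm_permutes)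
    show "word_eq (vspg_rels n) (schreier_rewrite n s (u @ l @ v))
      (schreier_rewrite n s (u @ r @ v))
        \<and> schreier_perm n s (u @ l @ v) = schreier_perm n s (u @ r @ v)"
      using vsg_rel_vword_ok[OF rel] vsg_rel_perm[OF rel]
      by (intro schreier_rewrite_in_context schreier_rewrite_vsg_rel[OF s' rel])
        (simp add: schreier_perm_eq)
  qed
qed simp
lemma vspg_word_eq_if_vsg_word_eq:
  assumes "\<forall>(x, b) \<in> set u1. pgen_ok n x" "\<forall>(x, b) \<in> set u2. pgen_ok n x"
    and "word_eq (vsg_rels n) (wsubst fusing u1) (wsubst fusing u2)"
  shows "word_eq (vspg_rels n) u1 u2"
  using word_eq_schreier_rewrite[OF assms(3)] permutes_id[of "{1..n}"]
    schreier_rewrite_wsubst_id[OF assms(1)] schreier_rewrite_wsubst_id[OF assms(2)]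
  by metis

section \<open>Fusing strings satisfy the relations of VSPG_n\<close>

lemma tr_range: "lo \<le> k \<Longrightarrow> k < n \<Longrightarrow> x \<in> {lo..n} \<Longrightarrow> tr k x \<in> {lo..n}"
  by (auto simp: transpose_def)

lemma tr_inj: "tr k x = tr k y \<longleftrightarrow> x = y"
  by (metis transpose_involutory)

lemma map_tr_distinct: "distinct (map (tr k) xs) = distinct xs"
  by (simp add: distinct_map inj_on_def tr_inj)

lemma map_tr_tr: "map (tr k) (map (tr k) xs) = xs"
  by (induction xs) auto

lemma distinct_tuple_induct_Cons:
  assumes cl: "\<And>k xs. lo \<le> k \<Longrightarrow> k < n \<Longrightarrow> distinct xs \<Longrightarrow> set xs \<subseteq> {lo..n} \<Longrightarrow> Q xs \<Longrightarrow> Q (map (tr k) xs)"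
    and base: "\<And>ys. distinct ys \<Longrightarrow> set ys \<subseteq> {Suc lo..n} \<Longrightarrow> length ys = m \<Longrightarrow> Q (lo # ys)"
  shows "a = lo + d \<Longrightarrow> distinct (a # ys) \<Longrightarrow> set (a # ys) \<subseteq> {lo..n} \<Longrightarrow> length ys = m \<Longrightarrow> Q (a # ys)"
proof (induction d arbitrary: a ys)
  case 0
  then have "set ys \<subseteq> {Suc lo..n}"
    by (auto simp: subset_iff) (metis atLeastAtMost_iff le_antisym not_less_eq_eq)
  then show ?case using 0 base by auto
next
  case (Suc d)
  let ?k = "a - 1"
  have k: "lo \<le> ?k" "?k < n" using Suc.prems by auto
  have ka: "tr ?k a = a - 1" using Suc.prems by (auto simp: transpose_def)
  let ?zs = "map (tr ?k) (a # ys)"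
  have zs: "?zs = (a - 1) # map (tr ?k) ys" using ka by simp
  have dz: "distinct ?zs" using Suc.prems(2) by (simp only: map_tr_distinct)
  have rz: "set ?zs \<subseteq> {lo..n}" using Suc.prems(3) tr_range[OF k] by auto
  have "Q ?zs" unfolding zs
    by (rule Suc.IH) (use Suc.prems dz rz zs in auto)
  then have "Q (map (tr ?k) ?zs)" using cl[OF k dz rz] by simp
  then show ?case by (simp only: map_tr_tr)
qed

lemma distinct_tuple_induct:
  assumes "\<And>k xs. lo \<le> k \<Longrightarrow> k < n \<Longrightarrow> distinct xs \<Longrightarrow> set xs \<subseteq> {lo..n} \<Longrightarrow> Q xs
      \<Longrightarrow> Q (map (tr k) xs)"
    and "Q [lo..<lo + length xs]" and "distinct xs" "set xs \<subseteq> {lo..n}"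
  shows "Q xs"
  using assms
proof (induction "length xs" arbitrary: xs lo Q)
  case 0 then show ?case by simp
next
  case (Suc m)
  obtain a ys where xs: "xs = a # ys" using Suc.hyps(2) by (cases xs) auto
  have m: "length ys = m" using Suc.hyps(2) xs by simp
  have a: "lo \<le> a" using Suc.prems xs by auto
  have base: "Q (lo # ys')" if ys': "distinct ys'" "set ys' \<subseteq> {Suc lo..n}" "length ys' = m" for ys'
  proof (rule Suc.hyps(1)[of ys' "Suc lo" "\<lambda>zs. Q (lo # zs)"])
    show "Q (lo # map (tr k) zs)"
      if "Suc lo \<le> k" "k < n" "distinct zs" "set zs \<subseteq> {Suc lo..n}" "Q (lo # zs)" for k zs
    proof -
      have "Q (map (tr k) (lo # zs))" by (rule Suc.prems(1)) (use that in \<open>auto simp: subset_iff\<close>)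
      moreover have "tr k lo = lo" using that by (auto simp: transpose_def)
      ultimately show ?thesis by simp
    qed
    have "lo # [Suc lo..<Suc lo + length ys'] = [lo..<lo + length xs]"
      using xs m ys'(3) by (simp add: upt_conv_Cons del: upt_Suc)
    then show "Q (lo # [Suc lo..<Suc lo + length ys'])" using Suc.prems(2) by simp
  qed (use ys' in auto)
  show ?case unfolding xs
    by (rule distinct_tuple_induct_Cons[OF Suc.prems(1) base, where a=a and d="a - lo" and ys=ys])
      (use a xs Suc.prems m in auto)
qed

definition fusing_product :: "pgen list \<Rightarrow> vgen word" where
  "fusing_product gs = concat (map fusing gs)"

lemma fusing_product_simps[simp]: "fusing_product [] = []"
  "fusing_product (g # gs) = fusing g @ fusing_product gs" by (simp_all add: fusing_product_def)

lemma vconj_fusing_product: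
  assumes "\<forall>g\<in>set gs. pgen_ok n g" "1 \<le> k" "k < n"
  shows "word_eq (vsg_rels n) (fusing_product (map (relabel (tr k)) gs))
    ([vl k] @ fusing_product gs @ [vl k])"
  using assms(1)
proof (induction gs)
  case Nil
  show ?case
    by simp (rule word_eq.sym, rule v_square_cancelI[where k=k and u="[]" and v="[]"],
        use assms in simp_all)
next
  case (Cons g gs)
  have "word_eq (vsg_rels n) (fusing_product (map (relabel (tr k)) (g # gs)))
    (([vl k] @ fusing g @ [vl k]) @ ([vl k] @ fusing_product gs @ [vl k]))"
    using word_eq_append[OF word_eq.sym[OF vconj_fusing[of n g k]] Cons.IH] Cons.prems assms by simp
  also have "word_eq (vsg_rels n) \<dots> (([vl k] @ fusing g) @ (fusing_product gs @ [vl k]))"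
    by (rule v_square_cancelI[where k=k and u="[vl k] @ fusing g"
      and v="fusing_product gs @ [vl k]"]) (use assms in simp_all)
  finally show ?case by simp
qed

lemma distinct_length_le: "distinct xs \<Longrightarrow> set xs \<subseteq> {1..n} \<Longrightarrow> length xs \<le> n"
  using card_mono[of "{1..n}" "set xs"] distinct_card[of xs] by simp

text \<open>Conjugation by \<open>v\<^sub>k\<close> relabels fusing strings by \<open>(k k+1)\<close>, and such transpositions carry
  \<open>[1..<1 + m]\<close> to any tuple of distinct indices; so a relation among fusing strings only has to
  be checked at the standard indices.\<close>

lemma fusing_product_eq_by_relabelling:
  assumes h1: "\<And>t xs. length xs = m
    \<Longrightarrow> Lf (map t xs) = map (relabel t) (Lf xs) \<and> Rf (map t xs) = map (relabel t) (Rf xs)"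
    and h2: "\<And>xs. distinct xs \<Longrightarrow> set xs \<subseteq> {1..n} \<Longrightarrow> length xs = m \<Longrightarrow>
               (\<forall>g\<in>set (Lf xs). pgen_ok n g) \<and> (\<forall>g\<in>set (Rf xs). pgen_ok n g)"
    and base: "m \<le> n
      \<Longrightarrow> word_eq (vsg_rels n) (fusing_product (Lf [1..<1 + m])) (fusing_product (Rf [1..<1 + m]))"
    and xs: "distinct xs" "set xs \<subseteq> {1..n}" "length xs = m"
  shows "word_eq (vsg_rels n) (fusing_product (Lf xs)) (fusing_product (Rf xs))"
proof -
  let ?Q = "\<lambda>xs. length xs = m \<longrightarrow> word_eq (vsg_rels n) (fusing_product (Lf xs))
    (fusing_product (Rf xs))"
  have "?Q xs"
  proof (rule distinct_tuple_induct[where lo=1])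
    show "?Q (map (tr k) ys)" if k: "1 \<le> k" "k < n" "distinct ys" "set ys \<subseteq> {1..n}" "?Q ys" for k ys
    proof
      assume len: "length (map (tr k) ys) = m"
      then have len': "length ys = m" by simp
      have ok: "(\<forall>g\<in>set (Lf ys). pgen_ok n g) \<and> (\<forall>g\<in>set (Rf ys). pgen_ok n g)" using h2 k len'
        by blast
      have "word_eq (vsg_rels n) (fusing_product (Lf (map (tr k) ys)))
        ([vl k] @ fusing_product (Lf ys) @ [vl k])"
        using vconj_fusing_product[of "Lf ys" n k] h1[OF len'] ok k by simp
      also have "word_eq (vsg_rels n) \<dots> ([vl k] @ fusing_product (Rf ys) @ [vl k])"
        by (rule word_eq_context) (use k len' in simp)
      also have "word_eq (vsg_rels n) \<dots> (fusing_product (Rf (map (tr k) ys)))"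
        using word_eq.sym[OF vconj_fusing_product[of "Rf ys" n k]] h1[OF len'] ok k by simp
      finally show "word_eq (vsg_rels n) (fusing_product (Lf (map (tr k) ys)))
        (fusing_product (Rf (map (tr k) ys)))" .
    qed
    show "?Q [1..<1 + length xs]" using base xs distinct_length_le[OF xs(1,2)] by simp
  qed (use xs in auto)
  then show ?thesis using xs by simp
qed

context
  fixes n :: nat
  assumes n3: "3 \<le> n"
begin

lemma mixed_conj_12:
  "c = Sig \<or> c = Tau \<Longrightarrow> word_eq (vsg_rels n) [vl 1, vl 2, cl c 1] [cl c 2, vl 1, vl 2]"
proof -
  assume c: "c = Sig \<or> c = Tau"
  have "word_eq (vsg_rels n) [vl 1, vl 2, cl c 1] [vl 1, vl 2, cl c 1, vl 2, vl 2]"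
    by (rule word_eq.sym, rule v_square_cancelI[where k=2 and u="[vl 1, vl 2, cl c 1]" and v="[]"])
      (use n3 in simp_all)
  also have "word_eq (vsg_rels n) \<dots> [vl 1, vl 1, cl c 2, vl 1, vl 2]"
    by (rule word_eq_rewrite[OF vsg_mixed_braid[OF c, of 2 n 1], where u="[vl 1]" and v="[vl 2]"])
      (use n3 in \<open>simp_all add: adj_def\<close>)
  also have "word_eq (vsg_rels n) \<dots> [cl c 2, vl 1, vl 2]"
    by (rule v_square_cancelI[where k=1 and u="[]" and v="[cl c 2, vl 1, vl 2]"])
      (use n3 in simp_all)
  finally show ?thesis .
qed

lemma mixed_conj_21:
  "c = Sig \<or> c = Tau \<Longrightarrow> word_eq (vsg_rels n) [vl 2, vl 1, cl c 2] [cl c 1, vl 2, vl 1]"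
proof -
  assume c: "c = Sig \<or> c = Tau"
  have "word_eq (vsg_rels n) [vl 2, vl 1, cl c 2] [vl 2, vl 1, cl c 2, vl 1, vl 1]"
    by (rule word_eq.sym, rule v_square_cancelI[where k=1 and u="[vl 2, vl 1, cl c 2]" and v="[]"])
      (use n3 in simp_all)
  also have "word_eq (vsg_rels n) \<dots> [vl 2, vl 2, cl c 1, vl 2, vl 1]"
    by (rule word_eq_rewrite[OF vsg_mixed_braid[OF c, of 1 n 2], where u="[vl 2]" and v="[vl 1]"])
      (use n3 in \<open>simp_all add: adj_def\<close>)
  also have "word_eq (vsg_rels n) \<dots> [cl c 1, vl 2, vl 1]"
    by (rule v_square_cancelI[where k=2 and u="[]" and v="[cl c 1, vl 2, vl 1]"])
      (use n3 in simp_all)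
  finally show ?thesis .
qed

lemma fusing_reduce_left: "c = Sig \<or> c = Tau \<Longrightarrow>
  word_eq (vsg_rels n) [cl e 1, vl 1, vl 2, cl Sig 1, vl 1, vl 2, cl c 2, vl 2]
    [cl e 1, cl Sig 2, cl c 1, vl 2, vl 1, vl 2]"
proof -
  assume c: "c = Sig \<or> c = Tau"
  have "word_eq (vsg_rels n) [cl e 1, vl 1, vl 2, cl Sig 1, vl 1, vl 2, cl c 2, vl 2]
    [cl e 1, cl Sig 2, vl 1, vl 2, vl 1, vl 2, cl c 2, vl 2]"
    by (rule word_eq_rewrite[OF mixed_conj_12[of Sig], where u="[cl e 1]"
      and v="[vl 1, vl 2, cl c 2, vl 2]"]) simp_all
  also have "word_eq (vsg_rels n) \<dots> [cl e 1, cl Sig 2, vl 2, vl 1, vl 2, vl 2, cl c 2, vl 2]"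
    by (rule word_eq_rewrite[OF vsg_v_braid[of 1 n 2], where u="[cl e 1, cl Sig 2]"
      and v="[vl 2, cl c 2, vl 2]"]) (use n3 in \<open>simp_all add: adj_def\<close>)
  also have "word_eq (vsg_rels n) \<dots> [cl e 1, cl Sig 2, vl 2, vl 1, cl c 2, vl 2]"
    by (rule v_square_cancelI[where k=2 and u="[cl e 1, cl Sig 2, vl 2, vl 1]"
      and v="[cl c 2, vl 2]"]) (use n3 in simp_all)
  also have "word_eq (vsg_rels n) \<dots> [cl e 1, cl Sig 2, cl c 1, vl 2, vl 1, vl 2]"
    by (rule word_eq_rewrite[OF mixed_conj_21[OF c], where u="[cl e 1, cl Sig 2]" and v="[vl 2]"])
      simp_all
  finally show ?thesis .
qed

lemma fusing_reduce_right: "c = Sig \<or> c = Tau \<Longrightarrow>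
  word_eq (vsg_rels n) [cl d 2, vl 2, vl 2, cl Sig 1, vl 1, vl 2, cl c 1, vl 1]
    [cl d 2, cl Sig 1, cl c 2, vl 1, vl 2, vl 1]"
proof -
  assume c: "c = Sig \<or> c = Tau"
  have "word_eq (vsg_rels n) [cl d 2, vl 2, vl 2, cl Sig 1, vl 1, vl 2, cl c 1, vl 1]
    [cl d 2, cl Sig 1, vl 1, vl 2, cl c 1, vl 1]"
    by (rule v_square_cancelI[where k=2 and u="[cl d 2]"
      and v="[cl Sig 1, vl 1, vl 2, cl c 1, vl 1]"]) (use n3 in simp_all)
  also have "word_eq (vsg_rels n) \<dots> [cl d 2, cl Sig 1, cl c 2, vl 1, vl 2, vl 1]"
    by (rule word_eq_rewrite[OF mixed_conj_12[OF c], where u="[cl d 2, cl Sig 1]" and v="[vl 1]"])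
      simp_all
  finally show ?thesis .
qed

lemma v_braid_suffix: "word_eq (vsg_rels n) (u @ [vl 2, vl 1, vl 2]) (u @ [vl 1, vl 2, vl 1])"
  by (rule word_eq_rewrite[OF vsg_v_braid[of 2 n 1], where u=u and v="[]"])
    (use n3 in \<open>simp_all add: adj_def\<close>)

lemma fusing_mu_triple_std:
  "word_eq (vsg_rels n) (fusing_product [Mu 1 2, Mu 1 3, Mu 2 3])
    (fusing_product [Mu 2 3, Mu 1 3, Mu 1 2])"
proof -
  have "word_eq (vsg_rels n) (fusing_product [Mu 1 2, Mu 1 3, Mu 2 3])
    [cl Sig 1, cl Sig 2, cl Sig 1, vl 2, vl 1, vl 2]"
    using fusing_reduce_left[of Sig Sig]
    by (simp add: vdown_def vup_def upt_rec numeral_2_eq_2 numeral_3_eq_3)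
  also have "word_eq (vsg_rels n) \<dots> [cl Sig 2, cl Sig 1, cl Sig 2, vl 2, vl 1, vl 2]"
    by (rule word_eq_rewrite[OF vsg_sigma_braid[of 1 n 2], where u="[]" and v="[vl 2, vl 1, vl 2]"])
      (use n3 in \<open>simp_all add: adj_def\<close>)
  also have "word_eq (vsg_rels n) \<dots> [cl Sig 2, cl Sig 1, cl Sig 2, vl 1, vl 2, vl 1]"
    using v_braid_suffix[of "[cl Sig 2, cl Sig 1, cl Sig 2]"] by simp
  also have "word_eq (vsg_rels n) \<dots> (fusing_product [Mu 2 3, Mu 1 3, Mu 1 2])"
    using word_eq.sym[OF fusing_reduce_right[of Sig Sig]]
    by (simp add: vdown_def vup_def upt_rec numeral_2_eq_2 numeral_3_eq_3)
  finally show ?thesis .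
qed

lemma fusing_mu_mu_gam_std:
  "word_eq (vsg_rels n) (fusing_product [Mu 1 2, Mu 1 3, Gam 2 3])
    (fusing_product [Gam 2 3, Mu 1 3, Mu 1 2])"
proof -
  have "word_eq (vsg_rels n) (fusing_product [Mu 1 2, Mu 1 3, Gam 2 3])
    [cl Sig 1, cl Sig 2, cl Tau 1, vl 2, vl 1, vl 2]"
    using fusing_reduce_left[of Tau Sig]
    by (simp add: vdown_def vup_def upt_rec numeral_2_eq_2 numeral_3_eq_3)
  also have "word_eq (vsg_rels n) \<dots> [cl Tau 2, cl Sig 1, cl Sig 2, vl 2, vl 1, vl 2]"
    by (rule word_eq_rewrite[OF vsg_sigma_sigma_tau[of 1 n 2], where u="[]"
      and v="[vl 2, vl 1, vl 2]"]) (use n3 in \<open>simp_all add: adj_def\<close>)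
  also have "word_eq (vsg_rels n) \<dots> [cl Tau 2, cl Sig 1, cl Sig 2, vl 1, vl 2, vl 1]"
    using v_braid_suffix[of "[cl Tau 2, cl Sig 1, cl Sig 2]"] by simp
  also have "word_eq (vsg_rels n) \<dots> (fusing_product [Gam 2 3, Mu 1 3, Mu 1 2])"
    using word_eq.sym[OF fusing_reduce_right[of Sig Tau]]
    by (simp add: vdown_def vup_def upt_rec numeral_2_eq_2 numeral_3_eq_3)
  finally show ?thesis .
qed

lemma fusing_gam_mu_mu_std:
  "word_eq (vsg_rels n) (fusing_product [Gam 1 2, Mu 1 3, Mu 2 3])
    (fusing_product [Mu 2 3, Mu 1 3, Gam 1 2])"
proof -
  have "word_eq (vsg_rels n) (fusing_product [Gam 1 2, Mu 1 3, Mu 2 3])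
    [cl Tau 1, cl Sig 2, cl Sig 1, vl 2, vl 1, vl 2]"
    using fusing_reduce_left[of Sig Tau]
    by (simp add: vdown_def vup_def upt_rec numeral_2_eq_2 numeral_3_eq_3)
  also have "word_eq (vsg_rels n) \<dots> [cl Sig 2, cl Sig 1, cl Tau 2, vl 2, vl 1, vl 2]"
    by (rule word_eq_rewrite_back[OF vsg_sigma_sigma_tau[of 2 n 1], where u="[]"
      and v="[vl 2, vl 1, vl 2]"]) (use n3 in \<open>simp_all add: adj_def\<close>)
  also have "word_eq (vsg_rels n) \<dots> [cl Sig 2, cl Sig 1, cl Tau 2, vl 1, vl 2, vl 1]"
    using v_braid_suffix[of "[cl Sig 2, cl Sig 1, cl Tau 2]"] by simp
  also have "word_eq (vsg_rels n) \<dots> (fusing_product [Mu 2 3, Mu 1 3, Gam 1 2])"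
    using word_eq.sym[OF fusing_reduce_right[of Tau Sig]]
    by (simp add: vdown_def vup_def upt_rec numeral_2_eq_2 numeral_3_eq_3)
  finally show ?thesis .
qed

end

lemma fusing_mu_gam_swap_std:
  "2 \<le> n \<Longrightarrow> word_eq (vsg_rels n) (fusing_product [Mu 1 2, Gam 2 1])
    (fusing_product [Gam 1 2, Mu 2 1])"
proof -
  assume n: "2 \<le> n"
  have sq: "word_eq (vsg_rels n) [cl a 1, vl 1, vl 1, cl b 1, vl 1, vl 1] [cl a 1, cl b 1]" for a b
  proof -
    have "word_eq (vsg_rels n) [cl a 1, vl 1, vl 1, cl b 1, vl 1, vl 1]
      [cl a 1, cl b 1, vl 1, vl 1]"
      by (rule v_square_cancelI[where k=1 and u="[cl a 1]" and v="[cl b 1, vl 1, vl 1]"])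
        (use n in simp_all)
    also have "word_eq (vsg_rels n) \<dots> [cl a 1, cl b 1]"
      by (rule v_square_cancelI[where k=1 and u="[cl a 1, cl b 1]" and v="[]"]) (use n in simp_all)
    finally show ?thesis .
  qed
  have "word_eq (vsg_rels n) (fusing_product [Mu 1 2, Gam 2 1]) [cl Sig 1, cl Tau 1]"
    using sq[of Sig Tau] by (simp add: vdown_def vup_def upt_rec numeral_2_eq_2 numeral_3_eq_3)
  also have "word_eq (vsg_rels n) \<dots> [cl Tau 1, cl Sig 1]"
    by (rule vsg_sigma_tau_commute) (use n in simp_all)
  also have "word_eq (vsg_rels n) \<dots> (fusing_product [Gam 1 2, Mu 2 1])"
    using word_eq.sym[OF sq[of Tau Sig]]
    by (simp add: vdown_def vup_def upt_rec numeral_2_eq_2 numeral_3_eq_3)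
  finally show ?thesis .
qed

lemma fusing_far_std: "4 \<le> n \<Longrightarrow> c = Sig \<or> c = Tau \<Longrightarrow> d = Sig \<or> d = Tau \<Longrightarrow>
  word_eq (vsg_rels n) [cl c 1, vl 1, cl d 3, vl 3] [cl d 3, vl 3, cl c 1, vl 1]"
proof -
  assume n: "4 \<le> n" and c: "c = Sig \<or> c = Tau" and d: "d = Sig \<or> d = Tau"
  have "word_eq (vsg_rels n) ([cl c 1] @ [vl 1] @ [cl d 3, vl 3] @ [])
    ([cl c 1] @ [cl d 3, vl 3] @ [vl 1] @ [])"
    by (rule far_commuteI[where x="V 1" and L="[cl d 3, vl 3]" and u="[cl c 1]" and v="[]"])
      (use n c d in \<open>auto simp: vgen_ok_def far_def\<close>)
  also have "word_eq (vsg_rels n) \<dots> ([] @ [cl d 3, vl 3] @ [cl c 1] @ [vl 1])"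
    by (rule far_commuteI[where x="c 1" and L="[cl d 3, vl 3]" and u="[]" and v="[vl 1]"])
      (use n c d in \<open>auto simp: vgen_ok_def far_def\<close>)
  finally show ?thesis by simp
qed

lemma upt_one: "[1..<1 + 2] = [1, 2::nat]" "[1..<1 + 3] = [1, 2, 3::nat]"
  "[1..<1 + 4] = [1, 2, 3, 4::nat]"
  by (simp_all add: upt_rec)

lemma fusing_mu_triple:
  assumes "distinct [i, j, k]" "set [i, j, k] \<subseteq> {1..n}"
  shows "word_eq (vsg_rels n) (wsubst fusing [pos (Mu i j), pos (Mu i k), pos (Mu j k)])
           (wsubst fusing [pos (Mu j k), pos (Mu i k), pos (Mu i j)])"
proof -
  let ?L = "\<lambda>xs. [Mu (xs!0) (xs!1), Mu (xs!0) (xs!2), Mu (xs!1) (xs!2)]"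
  let ?R = "\<lambda>xs. [Mu (xs!1) (xs!2), Mu (xs!0) (xs!2), Mu (xs!0) (xs!1)]"
  have "word_eq (vsg_rels n) (fusing_product (?L [i, j, k])) (fusing_product (?R [i, j, k]))"
  proof (rule fusing_product_eq_by_relabelling[where m=3])
    show "(\<forall>g\<in>set (?L xs). pgen_ok n g) \<and> (\<forall>g\<in>set (?R xs). pgen_ok n g)"
      if "distinct xs" "set xs \<subseteq> {1..n}" "length xs = 3" for xs
      using that by (auto simp: nth_eq_iff_index_eq subset_iff dest!: nth_mem)
    show "3 \<le> n
      \<Longrightarrow> word_eq (vsg_rels n) (fusing_product (?L [1..<1 + 3])) (fusing_product (?R [1..<1 + 3]))"
      unfolding upt_one using fusing_mu_triple_std by simp
  qed (use assms in auto)
  then show ?thesis by (simp add: fusing_product_def)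
qed

lemma fusing_mu_mu_gam:
  assumes "distinct [i, j, k]" "set [i, j, k] \<subseteq> {1..n}"
  shows "word_eq (vsg_rels n) (wsubst fusing [pos (Mu i j), pos (Mu i k), pos (Gam j k)])
           (wsubst fusing [pos (Gam j k), pos (Mu i k), pos (Mu i j)])"
proof -
  let ?L = "\<lambda>xs. [Mu (xs!0) (xs!1), Mu (xs!0) (xs!2), Gam (xs!1) (xs!2)]"
  let ?R = "\<lambda>xs. [Gam (xs!1) (xs!2), Mu (xs!0) (xs!2), Mu (xs!0) (xs!1)]"
  have "word_eq (vsg_rels n) (fusing_product (?L [i, j, k])) (fusing_product (?R [i, j, k]))"
  proof (rule fusing_product_eq_by_relabelling[where m=3])
    show "(\<forall>g\<in>set (?L xs). pgen_ok n g) \<and> (\<forall>g\<in>set (?R xs). pgen_ok n g)"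
      if "distinct xs" "set xs \<subseteq> {1..n}" "length xs = 3" for xs
      using that by (auto simp: nth_eq_iff_index_eq subset_iff dest!: nth_mem)
    show "3 \<le> n
      \<Longrightarrow> word_eq (vsg_rels n) (fusing_product (?L [1..<1 + 3])) (fusing_product (?R [1..<1 + 3]))"
      unfolding upt_one using fusing_mu_mu_gam_std by simp
  qed (use assms in auto)
  then show ?thesis by (simp add: fusing_product_def)
qed

lemma fusing_gam_mu_mu:
  assumes "distinct [i, j, k]" "set [i, j, k] \<subseteq> {1..n}"
  shows "word_eq (vsg_rels n) (wsubst fusing [pos (Gam i j), pos (Mu i k), pos (Mu j k)])
           (wsubst fusing [pos (Mu j k), pos (Mu i k), pos (Gam i j)])"
proof -
  let ?L = "\<lambda>xs. [Gam (xs!0) (xs!1), Mu (xs!0) (xs!2), Mu (xs!1) (xs!2)]"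
  let ?R = "\<lambda>xs. [Mu (xs!1) (xs!2), Mu (xs!0) (xs!2), Gam (xs!0) (xs!1)]"
  have "word_eq (vsg_rels n) (fusing_product (?L [i, j, k])) (fusing_product (?R [i, j, k]))"
  proof (rule fusing_product_eq_by_relabelling[where m=3])
    show "(\<forall>g\<in>set (?L xs). pgen_ok n g) \<and> (\<forall>g\<in>set (?R xs). pgen_ok n g)"
      if "distinct xs" "set xs \<subseteq> {1..n}" "length xs = 3" for xs
      using that by (auto simp: nth_eq_iff_index_eq subset_iff dest!: nth_mem)
    show "3 \<le> n
      \<Longrightarrow> word_eq (vsg_rels n) (fusing_product (?L [1..<1 + 3])) (fusing_product (?R [1..<1 + 3]))"
      unfolding upt_one using fusing_gam_mu_mu_std by simp
  qed (use assms in auto)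
  then show ?thesis by (simp add: fusing_product_def)
qed

lemma fusing_mu_gam_swap:
  assumes "distinct [i, j]" "set [i, j] \<subseteq> {1..n}"
  shows "word_eq (vsg_rels n) (wsubst fusing [pos (Mu i j), pos (Gam j i)])
           (wsubst fusing [pos (Gam i j), pos (Mu j i)])"
proof -
  let ?L = "\<lambda>xs. [Mu (xs!0) (xs!1), Gam (xs!1) (xs!0)]"
  let ?R = "\<lambda>xs. [Gam (xs!0) (xs!1), Mu (xs!1) (xs!0)]"
  have "word_eq (vsg_rels n) (fusing_product (?L [i, j])) (fusing_product (?R [i, j]))"
  proof (rule fusing_product_eq_by_relabelling[where m=2])
    show "(\<forall>g\<in>set (?L xs). pgen_ok n g) \<and> (\<forall>g\<in>set (?R xs). pgen_ok n g)"
      if "distinct xs" "set xs \<subseteq> {1..n}" "length xs = 2" for xs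
      using that by (auto simp: nth_eq_iff_index_eq subset_iff dest!: nth_mem)
    show "2 \<le> n
      \<Longrightarrow> word_eq (vsg_rels n) (fusing_product (?L [1..<1 + 2])) (fusing_product (?R [1..<1 + 2]))"
      unfolding upt_one using fusing_mu_gam_swap_std by simp
  qed (use assms in auto)
  then show ?thesis by (simp add: fusing_product_def)
qed

lemma fusing_mu_mu_far:
  assumes "distinct [i, j, k, l]" "set [i, j, k, l] \<subseteq> {1..n}"
  shows "word_eq (vsg_rels n) (wsubst fusing [pos (Mu i j), pos (Mu k l)])
           (wsubst fusing [pos (Mu k l), pos (Mu i j)])"
proof -
  let ?L = "\<lambda>xs. [Mu (xs!0) (xs!1), Mu (xs!2) (xs!3)]"
  let ?R = "\<lambda>xs. [Mu (xs!2) (xs!3), Mu (xs!0) (xs!1)]"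
  have "word_eq (vsg_rels n) (fusing_product (?L [i, j, k, l])) (fusing_product (?R [i, j, k, l]))"
  proof (rule fusing_product_eq_by_relabelling[where m=4])
    show "(\<forall>g\<in>set (?L xs). pgen_ok n g) \<and> (\<forall>g\<in>set (?R xs). pgen_ok n g)"
      if "distinct xs" "set xs \<subseteq> {1..n}" "length xs = 4" for xs
      using that by (auto simp: nth_eq_iff_index_eq subset_iff dest!: nth_mem)
    show "4 \<le> n
      \<Longrightarrow> word_eq (vsg_rels n) (fusing_product (?L [1..<1 + 4])) (fusing_product (?R [1..<1 + 4]))"
      unfolding upt_one using fusing_far_std[of n Sig Sig] by (simp add: vdown_empty vup_empty)
  qed (use assms in auto)
  then show ?thesis by (simp add: fusing_product_def)
qed

lemma fusing_gam_gam_far: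
  assumes "distinct [i, j, k, l]" "set [i, j, k, l] \<subseteq> {1..n}"
  shows "word_eq (vsg_rels n) (wsubst fusing [pos (Gam i j), pos (Gam k l)])
           (wsubst fusing [pos (Gam k l), pos (Gam i j)])"
proof -
  let ?L = "\<lambda>xs. [Gam (xs!0) (xs!1), Gam (xs!2) (xs!3)]"
  let ?R = "\<lambda>xs. [Gam (xs!2) (xs!3), Gam (xs!0) (xs!1)]"
  have "word_eq (vsg_rels n) (fusing_product (?L [i, j, k, l])) (fusing_product (?R [i, j, k, l]))"
  proof (rule fusing_product_eq_by_relabelling[where m=4])
    show "(\<forall>g\<in>set (?L xs). pgen_ok n g) \<and> (\<forall>g\<in>set (?R xs). pgen_ok n g)"
      if "distinct xs" "set xs \<subseteq> {1..n}" "length xs = 4" for xs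
      using that by (auto simp: nth_eq_iff_index_eq subset_iff dest!: nth_mem)
    show "4 \<le> n
      \<Longrightarrow> word_eq (vsg_rels n) (fusing_product (?L [1..<1 + 4])) (fusing_product (?R [1..<1 + 4]))"
      unfolding upt_one using fusing_far_std[of n Tau Tau] by (simp add: vdown_empty vup_empty)
  qed (use assms in auto)
  then show ?thesis by (simp add: fusing_product_def)
qed

lemma fusing_mu_gam_far:
  assumes "distinct [i, j, k, l]" "set [i, j, k, l] \<subseteq> {1..n}"
  shows "word_eq (vsg_rels n) (wsubst fusing [pos (Mu i j), pos (Gam k l)])
           (wsubst fusing [pos (Gam k l), pos (Mu i j)])"
proof -
  let ?L = "\<lambda>xs. [Mu (xs!0) (xs!1), Gam (xs!2) (xs!3)]"
  let ?R = "\<lambda>xs. [Gam (xs!2) (xs!3), Mu (xs!0) (xs!1)]"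
  have "word_eq (vsg_rels n) (fusing_product (?L [i, j, k, l])) (fusing_product (?R [i, j, k, l]))"
  proof (rule fusing_product_eq_by_relabelling[where m=4])
    show "(\<forall>g\<in>set (?L xs). pgen_ok n g) \<and> (\<forall>g\<in>set (?R xs). pgen_ok n g)"
      if "distinct xs" "set xs \<subseteq> {1..n}" "length xs = 4" for xs
      using that by (auto simp: nth_eq_iff_index_eq subset_iff dest!: nth_mem)
    show "4 \<le> n
      \<Longrightarrow> word_eq (vsg_rels n) (fusing_product (?L [1..<1 + 4])) (fusing_product (?R [1..<1 + 4]))"
      unfolding upt_one using fusing_far_std[of n Sig Tau] by (simp add: vdown_empty vup_empty)
  qed (use assms in auto)
  then show ?thesis by (simp add: fusing_product_def)
qed

lemma vspg_rel_fusing: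
  "(l, r) \<in> vspg_rels n \<Longrightarrow> word_eq (vsg_rels n) (wsubst fusing l) (wsubst fusing r)"
  unfolding vspg_rels_def
  by (elim UnE; clarify; rule fusing_mu_triple fusing_mu_mu_gam fusing_gam_mu_mu
      fusing_mu_gam_swap fusing_mu_mu_far fusing_gam_gam_far fusing_mu_gam_far; auto)

lemma word_eq_wsubst_fusing_iff:
  assumes "\<forall>(x, b) \<in> set u1. pgen_ok n x" "\<forall>(x, b) \<in> set u2. pgen_ok n x"
  shows "word_eq (vsg_rels n) (wsubst fusing u1) (wsubst fusing u2) \<longleftrightarrow> word_eq (vspg_rels n) u1 u2"
  using vspg_word_eq_if_vsg_word_eq[OF assms] word_eq_wsubst[OF _ vspg_rel_fusing] by blast

theorem mainTheorem7:
  fixes n :: nat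
  assumes "n \<ge> 2"
  shows "(\<forall>u. (\<forall>(x, b) \<in> set u. pgen_ok n x) \<longrightarrow> vsg_perm (wsubst fusing u) = id)
       \<and> (\<forall>w. (\<forall>(x, b) \<in> set w. vgen_ok n x) \<and> vsg_perm w = id \<longrightarrow>
            (\<exists>u. (\<forall>(x, b) \<in> set u. pgen_ok n x) \<and> word_eq (vsg_rels n) (wsubst fusing u) w))
       \<and> (\<forall>u1 u2. (\<forall>(x, b) \<in> set u1. pgen_ok n x) \<and> (\<forall>(x, b) \<in> set u2. pgen_ok n x) \<longrightarrow>
            (word_eq (vsg_rels n) (wsubst fusing u1) (wsubst fusing u2)
             \<longleftrightarrow> word_eq (vspg_rels n) u1 u2))"
proof (intro conjI allI impI)
  show "vsg_perm (wsubst fusing u) = id" for u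
    by (rule vsg_perm_wsubst_fusing)
  show "\<exists>u. (\<forall>(x, b) \<in> set u. pgen_ok n x) \<and> word_eq (vsg_rels n) (wsubst fusing u) w"
    if "(\<forall>(x, b) \<in> set w. vgen_ok n x) \<and> vsg_perm w = id" for w
    using that by (intro fusing_generate_pure) (auto simp: vword_ok_def)
  show "word_eq (vsg_rels n) (wsubst fusing u1) (wsubst fusing u2) \<longleftrightarrow> word_eq (vspg_rels n) u1 u2"
    if "(\<forall>(x, b) \<in> set u1. pgen_ok n x) \<and> (\<forall>(x, b) \<in> set u2. pgen_ok n x)" for u1 u2
    using that by (intro word_eq_wsubst_fusing_iff) auto
qed

end
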